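(* Let $n\geq 2$ and let $\Phi:\mathfrak{B}([n])\to \mathbf{Gpd}$ be a covariant strict 2-functor (equivalently, a functor from the poset $\mathfrak{B}([n])$ to the category of small groupoids). Suppose: (A1) for every integer $1\leq k\leq n-1$, the condition $A^{[k]}_\emptyset$ holds, i.e. the canonical functor $\operatorname{colim}_{\mathfrak{B}([k])}\Phi\to \Phi([k])$ is injective on objects; (A2) for every integer $1\leq k\leq n-2$ and every subset $U\subseteq\{k+2,\dots,n\}$, the condition $A^V_U$ holds, where $V=[k]\sqcup U$, i.e. the canonical functor $\operatorname{colim}_{\mathfrak{B}(V:U)}\Phi\to \Phi(V)$ is injective on objects. Then the comparison functor $\delta:\operatorname{2colim}_{\mathfrak{B}([n])}\Phi\to \operatorname{colim}_{\mathfrak{B}([n])}\Phi$ is an equivalence of categories.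
   Context: For $n\ge1$, $[n]=\{1,\dots,n\}$. For a finite set $V$, $\mathfrak{B}(V)$ is the poset (ordered by inclusion, regarded as a category) of all proper subsets of $V$; for a proper subset $U\subsetneq V$, $\mathfrak{B}(V:U)=\{X: U\subseteq X\subsetneq V\}$. For $k<n$, $\mathfrak{B}([k])$ is regarded as a subposet of $\mathfrak{B}([n])$, and for $U\subseteq V\subseteq[n]$ with $V\neq[n]$, $\mathfrak{B}(V:U)$ is regarded as a subposet of $\mathfrak{B}([n])$; colimits over these subposets are of the restriction of $\Phi$. For $S\subseteq T$ write $\Phi_{S,T}:\Phi(S)\to\Phi(T)$ for the induced functor. $\mathbf{Gpd}$ is the 2-category of small groupoids, functors and natural transformations. A functor is injective on objects if its map on object sets is injective. The colimit $\operatorname{colim}\Phi$ is the ordinary colimit in the category of small groupoids (it represents $\mathcal G\mapsto\lim_i\operatorname{Hom}(\Phi(i),\mathcal G)$); the canonical functor $\operatorname{colim}_{\mathfrak{B}(V:U)}\Phi\to\Phi(V)$ is induced by the functors $\Phi_{X,V}$. The 2-colimit $\operatorname{2colim}\Phi$ is a groupoid $\mathcal C$ with an equivalence $\operatorname{Hom}_{\mathbf{Gpd}}(\mathcal C,\mathcal G)\simeq \operatorname{2lim}_i\operatorname{Hom}_{\mathbf{Gpd}}(\Phi(i),\mathcal G)$ natural in groupoids $\mathcal G$, where for a functor $\Psi:I^{op}\to\mathbf{Gpd}$ on a poset $I$, $\operatorname{2lim}\Psi$ has objects $(x_i,\xi_{ij})$ with $x_i\in\Psi(i)$ and isomorphisms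 $\xi_{ij}:\Psi_{ij}(x_j)\to x_i$ ($i\le j$) satisfying $\xi_{ik}=\xi_{ij}\circ\Psi_{ij}(\xi_{jk})$ for $i\le j\le k$, and morphisms families $f_i:x_i\to y_i$ with $f_i\circ\xi_{ij}=\eta_{ij}\circ\Psi_{ij}(f_j)$. Concretely, $\operatorname{2colim}\Phi$ is the groupoid obtained from the Grothendieck construction $\int_I\Phi$ (objects $(i,x)$ with $x\in\Phi(i)$; morphisms $(i,x)\to(j,y)$ for $i\le j$ are morphisms $\Phi_{i,j}(x)\to y$ in $\Phi(j)$) by inverting all morphisms. The comparison functor $\delta$ is the functor corresponding (via these universal properties) to the fully faithful functor $\lim\operatorname{Hom}(\Phi,\mathcal G)\to\operatorname{2lim}\operatorname{Hom}(\Phi,\mathcal G)$, $(x_i)\mapsto(x_i,\mathrm{id})$; concretely it sends $(i,x)$ to the image of $x$ under $\Phi(i)\to\operatorname{colim}\Phi$. *)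

theory Defs
  imports Main
begin

text \<open>A (small) groupoid: object set, arrow set, domain, codomain,
  composition (cmp g f = g after f), identities, inverses.\<close>
record ('o,'m) gpd =
  Obj :: "'o set"
  Arr :: "'m set"
  dom :: "'m \<Rightarrow> 'o"
  cod :: "'m \<Rightarrow> 'o"
  cmp :: "'m \<Rightarrow> 'm \<Rightarrow> 'm"
  ide :: "'o \<Rightarrow> 'm"
  inv :: "'m \<Rightarrow> 'm"

definition is_gpd :: "('o,'m) gpd \<Rightarrow> bool" where
  "is_gpd G \<longleftrightarrow>
     (\<forall>f\<in>Arr G. dom G f \<in> Obj G \<and> cod G f \<in> Obj G) \<and>
     (\<forall>a\<in>Obj G. ide G a \<in> Arr G \<and> dom G (ide G a) = a \<and> cod G (ide G a) = a) \<and>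
     (\<forall>f\<in>Arr G. \<forall>g\<in>Arr G. cod G f = dom G g \<longrightarrow>
        cmp G g f \<in> Arr G \<and> dom G (cmp G g f) = dom G f \<and> cod G (cmp G g f) = cod G g) \<and>
     (\<forall>f\<in>Arr G. \<forall>g\<in>Arr G. \<forall>h\<in>Arr G. cod G f = dom G g \<longrightarrow> cod G g = dom G h \<longrightarrow>
        cmp G h (cmp G g f) = cmp G (cmp G h g) f) \<and>
     (\<forall>f\<in>Arr G. cmp G f (ide G (dom G f)) = f \<and> cmp G (ide G (cod G f)) f = f) \<and>
     (\<forall>f\<in>Arr G. inv G f \<in> Arr G \<and> dom G (inv G f) = cod G f \<and> cod G (inv G f) = dom G f \<and>
        cmp G (inv G f) f = ide G (dom G f) \<and> cmp G f (inv G f) = ide G (cod G f))"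

definition is_functor ::
  "('o,'m) gpd \<Rightarrow> ('p,'n) gpd \<Rightarrow> ('o \<Rightarrow> 'p) \<Rightarrow> ('m \<Rightarrow> 'n) \<Rightarrow> bool" where
  "is_functor G H Fo Fm \<longleftrightarrow>
     (\<forall>a\<in>Obj G. Fo a \<in> Obj H) \<and>
     (\<forall>f\<in>Arr G. Fm f \<in> Arr H \<and> dom H (Fm f) = Fo (dom G f) \<and> cod H (Fm f) = Fo (cod G f)) \<and>
     (\<forall>f\<in>Arr G. \<forall>g\<in>Arr G. cod G f = dom G g \<longrightarrow> Fm (cmp G g f) = cmp H (Fm g) (Fm f)) \<and>
     (\<forall>a\<in>Obj G. Fm (ide G a) = ide H (Fo a))"

definition hom :: "('o,'m) gpd \<Rightarrow> 'o \<Rightarrow> 'o \<Rightarrow> 'm set" where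
  "hom G a b = {f \<in> Arr G. dom G f = a \<and> cod G f = b}"

definition is_equivalence ::
  "('o,'m) gpd \<Rightarrow> ('p,'n) gpd \<Rightarrow> ('o \<Rightarrow> 'p) \<Rightarrow> ('m \<Rightarrow> 'n) \<Rightarrow> bool" where
  "is_equivalence G H Fo Fm \<longleftrightarrow>
     is_functor G H Fo Fm \<and>
     (\<forall>a\<in>Obj G. \<forall>b\<in>Obj G. bij_betw Fm (hom G a b) (hom H (Fo a) (Fo b))) \<and>
     (\<forall>y\<in>Obj H. \<exists>x\<in>Obj G. hom H (Fo x) y \<noteq> {})"

section \<open>Groupoids presented by generators and relations\<close>

text \<open>A path in a graph with vertices 'v and edges 'e: start vertex, word of
  edges with orientation (True = forward, False = formal inverse), end vertex.
  Words are read in diagrammatic order (first letter is traversed first).\<close>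
type_synonym ('v,'e) path = "'v \<times> ('e \<times> bool) list \<times> 'v"

fun is_walk :: "'e set \<Rightarrow> ('e \<Rightarrow> 'v) \<Rightarrow> ('e \<Rightarrow> 'v) \<Rightarrow> 'v \<Rightarrow> ('e \<times> bool) list \<Rightarrow> 'v \<Rightarrow> bool" where
  "is_walk E s t a [] b \<longleftrightarrow> a = b"
| "is_walk E s t a ((e,True) # w) b \<longleftrightarrow> e \<in> E \<and> s e = a \<and> is_walk E s t (t e) w b"
| "is_walk E s t a ((e,False) # w) b \<longleftrightarrow> e \<in> E \<and> t e = a \<and> is_walk E s t (s e) w b"

definition valid_path :: "'v set \<Rightarrow> 'e set \<Rightarrow> ('e \<Rightarrow> 'v) \<Rightarrow> ('e \<Rightarrow> 'v) \<Rightarrow> ('v,'e) path \<Rightarrow> bool" where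
  "valid_path V E s t p \<longleftrightarrow> (case p of (a,w,b) \<Rightarrow> a \<in> V \<and> b \<in> V \<and> is_walk E s t a w b)"

definition path_src :: "('v,'e) path \<Rightarrow> 'v" where "path_src p = fst p"
definition path_tgt :: "('v,'e) path \<Rightarrow> 'v" where "path_tgt p = snd (snd p)"

definition path_cat :: "('v,'e) path \<Rightarrow> ('v,'e) path \<Rightarrow> ('v,'e) path" where
  "path_cat p q = (fst p, fst (snd p) @ fst (snd q), snd (snd q))"

definition path_rev :: "('v,'e) path \<Rightarrow> ('v,'e) path" where
  "path_rev p = (snd (snd p), rev (map (\<lambda>(e,b). (e, \<not> b)) (fst (snd p))), fst p)"

inductive_set pcong ::
  "'v set \<Rightarrow> 'e set \<Rightarrow> ('e \<Rightarrow> 'v) \<Rightarrow> ('e \<Rightarrow> 'v) \<Rightarrow> (('v,'e) path \<times> ('v,'e) path) set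
     \<Rightarrow> (('v,'e) path \<times> ('v,'e) path) set"
  for V E s t R where
  prefl: "valid_path V E s t p \<Longrightarrow> (p, p) \<in> pcong V E s t R"
| psym: "(p, q) \<in> pcong V E s t R \<Longrightarrow> (q, p) \<in> pcong V E s t R"
| ptrans: "(p, q) \<in> pcong V E s t R \<Longrightarrow> (q, r) \<in> pcong V E s t R \<Longrightarrow> (p, r) \<in> pcong V E s t R"
| prel: "(p, q) \<in> R \<Longrightarrow> valid_path V E s t p \<Longrightarrow> valid_path V E s t q \<Longrightarrow>
         path_src p = path_src q \<Longrightarrow> path_tgt p = path_tgt q \<Longrightarrow> (p, q) \<in> pcong V E s t R"
| pcancel1: "e \<in> E \<Longrightarrow> s e \<in> V \<Longrightarrow> t e \<in> V \<Longrightarrow>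
         ((s e, [(e,True),(e,False)], s e), (s e, [], s e)) \<in> pcong V E s t R"
| pcancel2: "e \<in> E \<Longrightarrow> s e \<in> V \<Longrightarrow> t e \<in> V \<Longrightarrow>
         ((t e, [(e,False),(e,True)], t e), (t e, [], t e)) \<in> pcong V E s t R"
| pctx: "(p, q) \<in> pcong V E s t R \<Longrightarrow> valid_path V E s t u \<Longrightarrow> valid_path V E s t v \<Longrightarrow>
         path_tgt u = path_src p \<Longrightarrow> path_src v = path_tgt p \<Longrightarrow>
         (path_cat u (path_cat p v), path_cat u (path_cat q v)) \<in> pcong V E s t R"

definition pclass :: "'v set \<Rightarrow> 'e set \<Rightarrow> ('e \<Rightarrow> 'v) \<Rightarrow> ('e \<Rightarrow> 'v) \<Rightarrow>
    (('v,'e) path \<times> ('v,'e) path) set \<Rightarrow> ('v,'e) path \<Rightarrow> ('v,'e) path set" where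
  "pclass V E s t R p = pcong V E s t R `` {p}"

definition pres_gpd :: "'v set \<Rightarrow> 'e set \<Rightarrow> ('e \<Rightarrow> 'v) \<Rightarrow> ('e \<Rightarrow> 'v) \<Rightarrow>
    (('v,'e) path \<times> ('v,'e) path) set \<Rightarrow> ('v, ('v,'e) path set) gpd" where
  "pres_gpd V E s t R =
    \<lparr> Obj = V,
      Arr = {pclass V E s t R p | p. valid_path V E s t p},
      dom = (\<lambda>X. path_src (SOME p. p \<in> X)),
      cod = (\<lambda>X. path_tgt (SOME p. p \<in> X)),
      cmp = (\<lambda>Y X. pclass V E s t R (path_cat (SOME p. p \<in> X) (SOME q. q \<in> Y))),
      ide = (\<lambda>a. pclass V E s t R (a, [], a)),
      inv = (\<lambda>X. pclass V E s t R (path_rev (SOME p. p \<in> X))) \<rparr>"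

definition path_map :: "('v \<Rightarrow> 'w) \<Rightarrow> ('e \<Rightarrow> 'f) \<Rightarrow> ('v,'e) path \<Rightarrow> ('w,'f) path" where
  "path_map vm em p = (vm (fst p), map (\<lambda>(e,b). (em e, b)) (fst (snd p)), vm (snd (snd p)))"

definition pres_fun_arr :: "'w set \<Rightarrow> 'f set \<Rightarrow> ('f \<Rightarrow> 'w) \<Rightarrow> ('f \<Rightarrow> 'w) \<Rightarrow>
    (('w,'f) path \<times> ('w,'f) path) set \<Rightarrow> ('v \<Rightarrow> 'w) \<Rightarrow> ('e \<Rightarrow> 'f) \<Rightarrow>
    ('v,'e) path set \<Rightarrow> ('w,'f) path set" where
  "pres_fun_arr V' E' s' t' R' vm em X = pclass V' E' s' t' R' (path_map vm em (SOME p. p \<in> X))"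

text \<open>The poset of proper subsets of V, and the subposet B(V:U).\<close>
definition Bsets :: "nat set \<Rightarrow> nat set set" where
  "Bsets V = {X. X \<subset> V}"

definition Bsets_rel :: "nat set \<Rightarrow> nat set \<Rightarrow> nat set set" where
  "Bsets_rel V U = {X. U \<subseteq> X \<and> X \<subset> V}"

definition gpd_diagram :: "nat set set \<Rightarrow> (nat set \<Rightarrow> ('o,'m) gpd) \<Rightarrow>
    (nat set \<Rightarrow> nat set \<Rightarrow> 'o \<Rightarrow> 'o) \<Rightarrow> (nat set \<Rightarrow> nat set \<Rightarrow> 'm \<Rightarrow> 'm) \<Rightarrow> bool" where
  "gpd_diagram P Phi PhiO PhiM \<longleftrightarrow>
     (\<forall>X\<in>P. is_gpd (Phi X)) \<and>
     (\<forall>X\<in>P. \<forall>Y\<in>P. X \<subseteq> Y \<longrightarrow> is_functor (Phi X) (Phi Y) (PhiO X Y) (PhiM X Y)) \<and>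
     (\<forall>X\<in>P. (\<forall>x\<in>Obj (Phi X). PhiO X X x = x) \<and> (\<forall>f\<in>Arr (Phi X). PhiM X X f = f)) \<and>
     (\<forall>X\<in>P. \<forall>Y\<in>P. \<forall>Z\<in>P. X \<subseteq> Y \<longrightarrow> Y \<subseteq> Z \<longrightarrow>
        (\<forall>x\<in>Obj (Phi X). PhiO Y Z (PhiO X Y x) = PhiO X Z x) \<and>
        (\<forall>f\<in>Arr (Phi X). PhiM Y Z (PhiM X Y f) = PhiM X Z f))"

section \<open>The colimit of a diagram of groupoids (restricted to an index set I)\<close>

definition tot_obj :: "nat set set \<Rightarrow> (nat set \<Rightarrow> ('o,'m) gpd) \<Rightarrow> (nat set \<times> 'o) set" where
  "tot_obj I Phi = {(X, x) | X x. X \<in> I \<and> x \<in> Obj (Phi X)}"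

definition obj_step :: "nat set set \<Rightarrow> (nat set \<Rightarrow> ('o,'m) gpd) \<Rightarrow>
    (nat set \<Rightarrow> nat set \<Rightarrow> 'o \<Rightarrow> 'o) \<Rightarrow> ((nat set \<times> 'o) \<times> (nat set \<times> 'o)) set" where
  "obj_step I Phi PhiO = {((X, x), (Y, PhiO X Y x)) | X Y x. X \<in> I \<and> Y \<in> I \<and> X \<subseteq> Y \<and> x \<in> Obj (Phi X)}"

definition obj_eq :: "nat set set \<Rightarrow> (nat set \<Rightarrow> ('o,'m) gpd) \<Rightarrow>
    (nat set \<Rightarrow> nat set \<Rightarrow> 'o \<Rightarrow> 'o) \<Rightarrow> ((nat set \<times> 'o) \<times> (nat set \<times> 'o)) set" where
  "obj_eq I Phi PhiO = {(p, q). p \<in> tot_obj I Phi \<and>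
      (p, q) \<in> (obj_step I Phi PhiO \<union> (obj_step I Phi PhiO)\<inverse>)\<^sup>*}"

definition colim_V where
  "colim_V I Phi PhiO = tot_obj I Phi // obj_eq I Phi PhiO"

definition colim_E :: "nat set set \<Rightarrow> (nat set \<Rightarrow> ('o,'m) gpd) \<Rightarrow> (nat set \<times> 'm) set" where
  "colim_E I Phi = {(X, f) | X f. X \<in> I \<and> f \<in> Arr (Phi X)}"

definition colim_s where
  "colim_s Phi PhiO I = (\<lambda>(X, f). obj_eq I Phi PhiO `` {(X, dom (Phi X) f)})"

definition colim_t where
  "colim_t Phi PhiO I = (\<lambda>(X, f). obj_eq I Phi PhiO `` {(X, cod (Phi X) f)})"

text \<open>Relations: each Phi(X) \<rightarrow> colim is a functor (compositions and identities
  are respected) and the cocone is strictly compatible (f = Phi_{X,Y}(f)).\<close>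
definition colim_R :: "nat set set \<Rightarrow> (nat set \<Rightarrow> ('o,'m) gpd) \<Rightarrow>
    (nat set \<Rightarrow> nat set \<Rightarrow> 'o \<Rightarrow> 'o) \<Rightarrow> (nat set \<Rightarrow> nat set \<Rightarrow> 'm \<Rightarrow> 'm) \<Rightarrow>
    ((((nat set \<times> 'o) set), (nat set \<times> 'm)) path \<times> (((nat set \<times> 'o) set), (nat set \<times> 'm)) path) set" where
  "colim_R I Phi PhiO PhiM =
     (let c = (\<lambda>X x. obj_eq I Phi PhiO `` {(X, x)}) in
     {((c X (dom (Phi X) f), [((X, f), True), ((X, g), True)], c X (cod (Phi X) g)),
       (c X (dom (Phi X) f), [((X, cmp (Phi X) g f), True)], c X (cod (Phi X) g)))
       | X f g. X \<in> I \<and> f \<in> Arr (Phi X) \<and> g \<in> Arr (Phi X) \<and> cod (Phi X) f = dom (Phi X) g}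
     \<union> {((c X x, [((X, ide (Phi X) x), True)], c X x), (c X x, [], c X x))
       | X x. X \<in> I \<and> x \<in> Obj (Phi X)}
     \<union> {((c X (dom (Phi X) f), [((X, f), True)], c X (cod (Phi X) f)),
        (c X (dom (Phi X) f), [((Y, PhiM X Y f), True)], c X (cod (Phi X) f)))
       | X Y f. X \<in> I \<and> Y \<in> I \<and> X \<subseteq> Y \<and> f \<in> Arr (Phi X)})"

definition colim_gpd where
  "colim_gpd I Phi PhiO PhiM =
     pres_gpd (colim_V I Phi PhiO) (colim_E I Phi) (colim_s Phi PhiO I) (colim_t Phi PhiO I)
              (colim_R I Phi PhiO PhiM)"

definition canon_obj :: "(nat set \<Rightarrow> nat set \<Rightarrow> 'o \<Rightarrow> 'o) \<Rightarrow> nat set \<Rightarrow> (nat set \<times> 'o) set \<Rightarrow> 'o" where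
  "canon_obj PhiO V c = (case (SOME p. p \<in> c) of (X, x) \<Rightarrow> PhiO X V x)"

text \<open>Condition A^V_U: the canonical functor colim_{B(V:U)} Phi \<rightarrow> Phi(V) is injective on objects.\<close>
definition cond_A :: "(nat set \<Rightarrow> ('o,'m) gpd) \<Rightarrow> (nat set \<Rightarrow> nat set \<Rightarrow> 'o \<Rightarrow> 'o) \<Rightarrow>
    (nat set \<Rightarrow> nat set \<Rightarrow> 'm \<Rightarrow> 'm) \<Rightarrow> nat set \<Rightarrow> nat set \<Rightarrow> bool" where
  "cond_A Phi PhiO PhiM V U \<longleftrightarrow>
     inj_on (canon_obj PhiO V) (Obj (colim_gpd (Bsets_rel V U) Phi PhiO PhiM))"

section \<open>The 2-colimit: Grothendieck construction with all morphisms inverted\<close>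

definition tcolim_E :: "nat set set \<Rightarrow> (nat set \<Rightarrow> ('o,'m) gpd) \<Rightarrow>
    (nat set \<Rightarrow> nat set \<Rightarrow> 'o \<Rightarrow> 'o) \<Rightarrow> (nat set \<times> 'o \<times> nat set \<times> 'm) set" where
  "tcolim_E I Phi PhiO = {(X, x, Y, g) | X x Y g. X \<in> I \<and> Y \<in> I \<and> X \<subseteq> Y \<and>
      x \<in> Obj (Phi X) \<and> g \<in> Arr (Phi Y) \<and> dom (Phi Y) g = PhiO X Y x}"

definition tcolim_s :: "nat set \<times> 'o \<times> nat set \<times> 'm \<Rightarrow> nat set \<times> 'o" where
  "tcolim_s = (\<lambda>(X, x, Y, g). (X, x))"

definition tcolim_t :: "(nat set \<Rightarrow> ('o,'m) gpd) \<Rightarrow> nat set \<times> 'o \<times> nat set \<times> 'm \<Rightarrow> nat set \<times> 'o" where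
  "tcolim_t Phi = (\<lambda>(X, x, Y, g). (Y, cod (Phi Y) g))"

text \<open>Relations: composition and identities of the Grothendieck construction.\<close>
definition tcolim_R :: "nat set set \<Rightarrow> (nat set \<Rightarrow> ('o,'m) gpd) \<Rightarrow>
    (nat set \<Rightarrow> nat set \<Rightarrow> 'o \<Rightarrow> 'o) \<Rightarrow> (nat set \<Rightarrow> nat set \<Rightarrow> 'm \<Rightarrow> 'm) \<Rightarrow>
    ((nat set \<times> 'o, nat set \<times> 'o \<times> nat set \<times> 'm) path \<times> (nat set \<times> 'o, nat set \<times> 'o \<times> nat set \<times> 'm) path) set" where
  "tcolim_R I Phi PhiO PhiM =
     {(((X, x), [((X, x, Y, g), True), ((Y, cod (Phi Y) g, Z, h), True)], (Z, cod (Phi Z) h)),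
       ((X, x), [((X, x, Z, cmp (Phi Z) h (PhiM Y Z g)), True)], (Z, cod (Phi Z) h)))
       | X x Y g Z h. (X, x, Y, g) \<in> tcolim_E I Phi PhiO \<and> (Y, cod (Phi Y) g, Z, h) \<in> tcolim_E I Phi PhiO}
     \<union> {(((X, x), [((X, x, X, ide (Phi X) x), True)], (X, x)), ((X, x), [], (X, x)))
       | X x. X \<in> I \<and> x \<in> Obj (Phi X)}"

definition tcolim_gpd where
  "tcolim_gpd I Phi PhiO PhiM =
     pres_gpd (tot_obj I Phi) (tcolim_E I Phi PhiO) tcolim_s (tcolim_t Phi) (tcolim_R I Phi PhiO PhiM)"

definition delta_obj :: "nat set set \<Rightarrow> (nat set \<Rightarrow> ('o,'m) gpd) \<Rightarrow>
    (nat set \<Rightarrow> nat set \<Rightarrow> 'o \<Rightarrow> 'o) \<Rightarrow> nat set \<times> 'o \<Rightarrow> (nat set \<times> 'o) set" where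
  "delta_obj I Phi PhiO p = obj_eq I Phi PhiO `` {p}"

definition delta_edge :: "nat set \<times> 'o \<times> nat set \<times> 'm \<Rightarrow> nat set \<times> 'm" where
  "delta_edge = (\<lambda>(X, x, Y, g). (Y, g))"

definition delta_arr where
  "delta_arr I Phi PhiO PhiM =
     pres_fun_arr (colim_V I Phi PhiO) (colim_E I Phi) (colim_s Phi PhiO I) (colim_t Phi PhiO I)
       (colim_R I Phi PhiO PhiM) (delta_obj I Phi PhiO) delta_edge"

end

theory Submission
  imports Defs
begin

text \<open>Both groupoids are presented by generators and relations: the 2-colimit by the morphisms of
  the Grothendieck construction of \<open>Phi\<close>, the colimit by the morphisms of the groupoids \<open>Phi X\<close>
  with objects identified along the functors \<open>Phi\<^sub>X\<^sub>,\<^sub>Y\<close>. The comparison functor collapses the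
  unit morphisms \<open>(X,x) \<rightarrow> (Y, Phi\<^sub>X\<^sub>,\<^sub>Y x)\<close>. It is an equivalence as soon as every object of the
  Grothendieck construction can be joined, coherently with the unit morphisms, to a chosen
  representative of its class by a path of unit morphisms (a contraction): conjugating by these
  paths kills the unit morphisms and yields an inverse functor.

  A contraction is built by induction on \<open>m\<close> over the proper subsets containing \<open>{m+1..n}\<close>. The
  sets added at step \<open>m\<close> are those missing \<open>m\<close>; all of them except \<open>{1..n}-{m}\<close> are routed
  through \<open>X \<union> {m}\<close>, and for the top set \<open>{1..n}-{m}\<close> one needs that objects with the same image
  in \<open>Phi({1..n}-{m})\<close> are already identified in the colimit over the sets between \<open>{m+1..n}\<close> and
  \<open>{1..n}-{m}\<close>. That is condition \<open>A\<close>, supplied by (A2) for \<open>1 < m < n\<close> and by (A1) for \<open>m = n\<close>;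
  for \<open>m = 1\<close> it holds trivially.\<close>

section \<open>Paths and presented groupoids\<close>

lemma is_walk_append:
  "is_walk E s t a (w1 @ w2) c \<longleftrightarrow> (\<exists>b. is_walk E s t a w1 b \<and> is_walk E s t b w2 c)"
proof (induction w1 arbitrary: a)
  case (Cons x w1)
  obtain e b where "x = (e,b)" by force
  thus ?case using Cons by (cases b) auto
qed simp

lemma is_walk_mono: "is_walk E s t a w b \<Longrightarrow> E \<subseteq> E' \<Longrightarrow> is_walk E' s t a w b"
proof (induction w arbitrary: a)
  case (Cons x w)
  obtain e b where "x = (e,b)" by force
  thus ?case using Cons by (cases b) (simp_all add: subset_iff)
qed simp

definition word_inv :: "('e \<times> bool) list \<Rightarrow> ('e \<times> bool) list" where
  "word_inv w = rev (map (\<lambda>(e,b). (e, \<not> b)) w)"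

lemma word_inv_simps[simp]:
  "word_inv [] = []" "word_inv (x # w) = word_inv w @ [(fst x, \<not> snd x)]"
  "word_inv (w1 @ w2) = word_inv w2 @ word_inv w1"
  by (auto simp: word_inv_def case_prod_beta)

lemma word_inv_word_inv[simp]: "word_inv (word_inv w) = w"
  by (induction w) auto

lemma is_walk_word_inv: "is_walk E s t a w b \<Longrightarrow> is_walk E s t b (word_inv w) a"
proof (induction w arbitrary: a)
  case (Cons x w1)
  obtain e b where "x = (e,b)" by force
  thus ?case using Cons by (cases b) (auto simp: is_walk_append)
qed simp

definition path_id :: "'v \<Rightarrow> ('v,'e) path" where "path_id a = (a, [], a)"

definition edge_path :: "('e \<Rightarrow> 'v) \<Rightarrow> ('e \<Rightarrow> 'v) \<Rightarrow> 'e \<Rightarrow> ('v,'e) path" where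
  "edge_path s t e = (s e, [(e,True)], t e)"

lemma path_simps[simp]:
  "path_src (a,w,b) = a" "path_tgt (a,w,b) = b"
  "path_cat (a,w,b) (c,w',d) = (a, w @ w', d)"
  "path_rev (a,w,b) = (b, word_inv w, a)"
  "path_id a = (a,[],a)" "edge_path s t e = (s e, [(e,True)], t e)"
  by (auto simp: path_src_def path_tgt_def path_cat_def path_rev_def word_inv_def path_id_def edge_path_def)

lemma path_ends_simps[simp]:
  "path_src (path_cat p q) = path_src p" "path_tgt (path_cat p q) = path_tgt q"
  "path_src (path_rev p) = path_tgt p" "path_tgt (path_rev p) = path_src p"
  by (auto simp: path_cat_def path_src_def path_tgt_def path_rev_def)

lemma path_rev_rev[simp]: "path_rev (path_rev p) = p"
  by (cases p) auto

lemma path_rev_cat[simp]: "path_rev (path_cat p q) = path_cat (path_rev q) (path_rev p)"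
  by (cases p; cases q) simp

lemma path_cat_assoc: "path_cat (path_cat p q) r = path_cat p (path_cat q r)"
  by (simp add: path_cat_def)

lemma path_cat_id_left[simp]: "path_src p = a \<Longrightarrow> path_cat (a,[],a) p = p"
  by (cases p) auto

lemma path_cat_id_right[simp]: "path_tgt p = a \<Longrightarrow> path_cat p (a,[],a) = p"
  by (cases p) auto

lemma valid_path_mono:
  "valid_path V E s t p \<Longrightarrow> V \<subseteq> V' \<Longrightarrow> E \<subseteq> E' \<Longrightarrow> valid_path V' E' s t p"
  by (cases p) (auto simp: valid_path_def intro: is_walk_mono)

lemma pcong_mono:
  assumes "V \<subseteq> V'" "E \<subseteq> E'" "R \<subseteq> R'"
  shows "pcong V E s t R \<subseteq> pcong V' E' s t R'"
proof -
  have "(p,q) \<in> pcong V E s t R \<Longrightarrow> (p,q) \<in> pcong V' E' s t R'" for p q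
  proof (induction rule: pcong.induct)
    case (prefl p) thus ?case using assms valid_path_mono by (metis pcong.prefl)
  next
    case (psym p q) from psym.IH show ?case by (rule pcong.psym)
  next
    case (ptrans p q r) thus ?case by (blast intro: pcong.ptrans)
  next
    case (prel p q) thus ?case using assms valid_path_mono[of V E s t _ V' E'] by (intro pcong.prel) auto
  next
    case (pcancel1 e) thus ?case using assms by (intro pcong.pcancel1) auto
  next
    case (pcancel2 e) thus ?case using assms by (intro pcong.pcancel2) auto
  next
    case (pctx p q u v) thus ?case using assms valid_path_mono[of V E s t _ V' E'] by (intro pcong.pctx) auto
  qed
  thus ?thesis by auto
qed

locale presentation =
  fixes V :: "'v set" and E :: "'e set" and s t :: "'e \<Rightarrow> 'v"
    and R :: "(('v,'e) path \<times> ('v,'e) path) set"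
  assumes edge_ends: "\<And>e. e \<in> E \<Longrightarrow> s e \<in> V \<and> t e \<in> V"
begin

abbreviation "cong \<equiv> pcong V E s t R"
abbreviation "valid \<equiv> valid_path V E s t"

lemma valid_iff: "valid (a,w,b) \<longleftrightarrow> a \<in> V \<and> b \<in> V \<and> is_walk E s t a w b"
  by (simp add: valid_path_def)

lemma valid_Cons_split:
  assumes "valid (a, x # w, b)"
  obtains c where "valid (a,[x],c)" "valid (c,w,b)"
proof -
  obtain c where c: "is_walk E s t a [x] c" "is_walk E s t c w b" "a \<in> V" "b \<in> V"
    using assms is_walk_append[of E s t a "[x]" w b] by (auto simp: valid_iff)
  have "c \<in> V" using c(1) by (cases x; cases "snd x") (auto dest: edge_ends)
  with c show thesis by (intro that) (auto simp: valid_iff)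
qed

lemma valid_path_cat: "valid p \<Longrightarrow> valid q \<Longrightarrow> path_tgt p = path_src q \<Longrightarrow> valid (path_cat p q)"
  by (cases p; cases q) (auto simp: valid_iff is_walk_append)

lemma valid_path_rev: "valid p \<Longrightarrow> valid (path_rev p)"
  by (cases p) (auto simp: valid_iff is_walk_word_inv)

lemma valid_edge_path: "e \<in> E \<Longrightarrow> valid (edge_path s t e)"
  using edge_ends by (simp add: valid_iff)

lemma valid_ends: "valid p \<Longrightarrow> path_src p \<in> V \<and> path_tgt p \<in> V"
  by (cases p) (simp add: valid_iff)

lemma cong_valid: "(p,q) \<in> cong \<Longrightarrow> valid p \<and> valid q \<and> path_src p = path_src q \<and> path_tgt p = path_tgt q"
  by (induction rule: pcong.induct) (auto simp: valid_path_cat valid_iff)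

lemma cong_refl: "valid p \<Longrightarrow> (p,p) \<in> cong" by (rule prefl)
lemma cong_sym: "(p,q) \<in> cong \<Longrightarrow> (q,p) \<in> cong" by (rule psym)
lemma cong_trans[trans]: "(p,q) \<in> cong \<Longrightarrow> (q,r) \<in> cong \<Longrightarrow> (p,r) \<in> cong" by (rule ptrans)

lemma cong_cat_right:
  assumes "(p,q) \<in> cong" "valid v" "path_src v = path_tgt p"
  shows "(path_cat p v, path_cat q v) \<in> cong"
proof -
  have "(path_cat (path_id (path_src p)) (path_cat p v), path_cat (path_id (path_src p)) (path_cat q v)) \<in> cong"
    using assms cong_valid[OF assms(1)] by (intro pctx) (auto simp: valid_path_def)
  thus ?thesis using cong_valid[OF assms(1)] by (cases p; cases q; cases v) auto
qed

lemma cong_cat_left: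
  assumes "(p,q) \<in> cong" "valid u" "path_tgt u = path_src p"
  shows "(path_cat u p, path_cat u q) \<in> cong"
proof -
  have "(path_cat u (path_cat p (path_id (path_tgt p))), path_cat u (path_cat q (path_id (path_tgt p)))) \<in> cong"
    using assms cong_valid[OF assms(1)] by (intro pctx) (auto simp: valid_path_def)
  thus ?thesis using cong_valid[OF assms(1)] by (cases p; cases q; cases u) auto
qed

lemma cong_cat:
  assumes "(p,p') \<in> cong" "(q,q') \<in> cong" "path_tgt p = path_src q"
  shows "(path_cat p q, path_cat p' q') \<in> cong"
proof (rule cong_trans)
  show "(path_cat p q, path_cat p' q) \<in> cong"
    using assms cong_valid[OF assms(2)] by (intro cong_cat_right) auto
  show "(path_cat p' q, path_cat p' q') \<in> cong"
    using assms cong_valid[OF assms(1)] by (intro cong_cat_left) auto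
qed

lemma cong_edge_cancel:
  assumes "valid (a, [x], b)"
  shows "((a, [x, (fst x, \<not> snd x)], a), path_id a) \<in> cong"
proof -
  obtain e d where x: "x = (e,d)" by force
  show ?thesis
  proof (cases d)
    case True
    with assms x have "e \<in> E" "s e = a" "t e = b" "a \<in> V" "b \<in> V" by (auto simp: valid_iff)
    hence "((s e, [(e,True),(e,False)], s e), (s e, [], s e)) \<in> cong" by (intro pcancel1) auto
    thus ?thesis using x True \<open>s e = a\<close> by simp
  next
    case False
    with assms x have "e \<in> E" "t e = a" "s e = b" "a \<in> V" "b \<in> V" by (auto simp: valid_iff)
    hence "((t e, [(e,False),(e,True)], t e), (t e, [], t e)) \<in> cong" by (intro pcancel2) auto
    thus ?thesis using x False \<open>t e = a\<close> by simp
  qed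
qed

lemma cong_word_cancel: "valid (a,w,b) \<Longrightarrow> ((a, w @ word_inv w, a), path_id a) \<in> cong"
proof (induction w arbitrary: a b)
  case Nil thus ?case by (auto simp: valid_iff intro!: cong_refl)
next
  case (Cons x w)
  from Cons.prems obtain c where x: "valid (a,[x],c)" and w: "valid (c,w,b)" by (rule valid_Cons_split)
  let ?x' = "(c, [(fst x, \<not> snd x)], a)"
  have x': "valid ?x'" using valid_path_rev[OF x] by (simp add: word_inv_def case_prod_beta)
  have "(path_cat (a,[x],c) (path_cat (c, w @ word_inv w, c) ?x'),
         path_cat (a,[x],c) (path_cat (path_id c) ?x')) \<in> cong"
    by (rule pctx[OF Cons.IH[OF w] x x']) auto
  hence "((a, x # w @ word_inv w @ [(fst x, \<not> snd x)], a), (a, [x, (fst x, \<not> snd x)], a)) \<in> cong"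
    by simp
  moreover have "((a, [x, (fst x, \<not> snd x)], a), path_id a) \<in> cong" by (rule cong_edge_cancel[OF x])
  ultimately show ?case by (simp only: append.simps append_assoc word_inv_simps) (rule cong_trans)
qed

lemma cong_cat_rev: "valid p \<Longrightarrow> (path_cat p (path_rev p), path_id (path_src p)) \<in> cong"
  using cong_word_cancel by (cases p) simp

lemma cong_rev_cat: "valid p \<Longrightarrow> (path_cat (path_rev p) p, path_id (path_tgt p)) \<in> cong"
  using cong_cat_rev[OF valid_path_rev, of p] by simp

lemma cong_rev:
  assumes pq: "(p,q) \<in> cong"
  shows "(path_rev p, path_rev q) \<in> cong"
proof -
  note v = cong_valid[OF pq]
  have p': "valid (path_rev p)" and q': "valid (path_rev q)" using v valid_path_rev by blast+
  have "(path_rev p, path_cat (path_rev p) (path_cat q (path_rev q))) \<in> cong"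
    using cong_cat_left[OF cong_cat_rev p', of q] v by (simp add: cong_sym)
  also have "(path_cat (path_rev p) (path_cat q (path_rev q)), path_cat (path_cat (path_rev p) p) (path_rev q)) \<in> cong"
    using cong_cat_right[OF cong_cat_left[OF cong_sym[OF pq] p'] q'] v by (simp add: path_cat_assoc)
  also have "(path_cat (path_cat (path_rev p) p) (path_rev q), path_rev q) \<in> cong"
    using cong_cat_right[OF cong_rev_cat q'] v by simp
  finally show ?thesis .
qed

lemma cong_cancel_mid:
  assumes "valid u" "valid f" "valid v" "path_tgt u = path_src f" "path_src v = path_src f"
  shows "(path_cat u (path_cat f (path_cat (path_rev f) v)), path_cat u v) \<in> cong"
proof -
  have "(path_cat (path_cat f (path_rev f)) v, path_cat (path_id (path_src f)) v) \<in> cong"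
    using assms by (intro cong_cat_right cong_cat_rev) auto
  hence "(path_cat f (path_cat (path_rev f) v), v) \<in> cong"
    using assms by (simp add: path_cat_assoc)
  thus ?thesis using assms by (intro cong_cat_left) auto
qed

lemma cong_cancel_mid_rev:
  assumes "valid u" "valid f" "valid v" "path_tgt u = path_tgt f" "path_src v = path_tgt f"
  shows "(path_cat u (path_cat (path_rev f) (path_cat f v)), path_cat u v) \<in> cong"
  using cong_cancel_mid[of u "path_rev f" v] assms by (simp add: valid_path_rev)

lemma cong_cancel_left:
  "valid f \<Longrightarrow> valid v \<Longrightarrow> path_src v = path_src f \<Longrightarrow> (path_cat f (path_cat (path_rev f) v), v) \<in> cong"
  using cong_cancel_mid[of "path_id (path_src f)" f v] valid_ends by (simp add: valid_iff)

end

fun word_subst :: "('e \<Rightarrow> ('w,'f) path) \<Rightarrow> ('e \<times> bool) list \<Rightarrow> ('f \<times> bool) list" where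
  "word_subst em [] = []"
| "word_subst em (x # w) =
     (if snd x then fst (snd (em (fst x))) else word_inv (fst (snd (em (fst x))))) @ word_subst em w"

lemma word_subst_append[simp]: "word_subst em (w1 @ w2) = word_subst em w1 @ word_subst em w2"
  by (induction w1) auto

lemma word_subst_word_inv[simp]: "word_subst em (word_inv w) = word_inv (word_subst em w)"
  by (induction w) auto

definition path_subst :: "('v \<Rightarrow> 'w) \<Rightarrow> ('e \<Rightarrow> ('w,'f) path) \<Rightarrow> ('v,'e) path \<Rightarrow> ('w,'f) path" where
  "path_subst vm em p = (vm (path_src p), word_subst em (fst (snd p)), vm (path_tgt p))"

lemma path_subst_simp[simp]: "path_subst vm em (a,w,b) = (vm a, word_subst em w, vm b)"
  by (simp add: path_subst_def)

lemma path_subst_cat[simp]: "path_subst vm em (path_cat p q) = path_cat (path_subst vm em p) (path_subst vm em q)"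
  by (cases p; cases q) auto

lemma path_subst_rev[simp]: "path_subst vm em (path_rev p) = path_rev (path_subst vm em p)"
  by (cases p) auto

lemma path_subst_ends[simp]:
  "path_src (path_subst vm em p) = vm (path_src p)" "path_tgt (path_subst vm em p) = vm (path_tgt p)"
  by (cases p; simp)+

lemma word_subst_comp: "word_subst em2 (word_subst em1 w) = word_subst (\<lambda>e. path_subst vm2 em2 (em1 e)) w"
proof (induction w)
  case (Cons x w)
  obtain a u b where "em1 (fst x) = (a,u,b)" by (cases "em1 (fst x)")
  thus ?case using Cons by auto
qed simp

lemma path_subst_comp:
  "path_subst vm2 em2 (path_subst vm1 em1 p) = path_subst (vm2 \<circ> vm1) (\<lambda>e. path_subst vm2 em2 (em1 e)) p"
  by (cases p) (simp add: word_subst_comp)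

lemma path_map_eq_path_subst: "path_map vm em p = path_subst vm (\<lambda>e. (vm (s e), [(em e, True)], vm (t e))) p"
proof -
  have "map (\<lambda>(e,b). (em e, b)) w = word_subst (\<lambda>e. (vm (s e), [(em e, True)], vm (t e))) w" for w
    by (induction w) (auto simp: word_inv_def)
  thus ?thesis by (cases p) (simp add: path_map_def)
qed

locale presentation_map = G: presentation V E s t R + H: presentation V' E' s' t' R'
  for V :: "'v set" and E :: "'e set" and s t :: "'e \<Rightarrow> 'v" and R
  and V' :: "'w set" and E' :: "'f set" and s' t' :: "'f \<Rightarrow> 'w" and R' +
  fixes vm :: "'v \<Rightarrow> 'w" and em :: "'e \<Rightarrow> ('w,'f) path"
  assumes vmap_closed: "\<And>v. v \<in> V \<Longrightarrow> vm v \<in> V'"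
  and emap_valid: "\<And>e. e \<in> E \<Longrightarrow> H.valid (em e) \<and> path_src (em e) = vm (s e) \<and> path_tgt (em e) = vm (t e)"
  and emap_rel: "\<And>p q. (p,q) \<in> R \<Longrightarrow> G.valid p \<Longrightarrow> G.valid q \<Longrightarrow> path_src p = path_src q \<Longrightarrow>
              path_tgt p = path_tgt q \<Longrightarrow> (path_subst vm em p, path_subst vm em q) \<in> H.cong"
begin

lemma is_walk_subst: "is_walk E s t a w b \<Longrightarrow> is_walk E' s' t' (vm a) (word_subst em w) (vm b)"
proof (induction w arbitrary: a)
  case (Cons x w)
  obtain e d where x: "x = (e,d)" by force
  obtain c u c' where emd: "em e = (c,u,c')" by (cases "em e")
  show ?case
  proof (cases d)
    case True
    with Cons.prems x have h: "e \<in> E" "s e = a" "is_walk E s t (t e) w b" by auto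
    from emap_valid[OF h(1)] emd h have "is_walk E' s' t' (vm a) u (vm (t e))" by (auto simp: H.valid_iff)
    with Cons.IH[OF h(3)] show ?thesis using x True emd by (auto simp: is_walk_append)
  next
    case False
    with Cons.prems x have h: "e \<in> E" "t e = a" "is_walk E s t (s e) w b" by auto
    from emap_valid[OF h(1)] emd h have "is_walk E' s' t' (vm (s e)) u (vm a)" by (auto simp: H.valid_iff)
    with Cons.IH[OF h(3)] show ?thesis using x False emd by (auto simp: is_walk_append dest: is_walk_word_inv)
  qed
qed simp

lemma valid_path_subst: "G.valid p \<Longrightarrow> H.valid (path_subst vm em p)"
  by (cases p) (auto simp: G.valid_iff H.valid_iff vmap_closed is_walk_subst)

lemma cong_subst: "(p,q) \<in> G.cong \<Longrightarrow> (path_subst vm em p, path_subst vm em q) \<in> H.cong"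
proof (induction rule: pcong.induct)
  case (prefl p) thus ?case by (intro H.cong_refl valid_path_subst)
next
  case (psym p q) from psym.IH show ?case by (rule H.cong_sym)
next
  case (ptrans p q r) thus ?case by (blast intro: H.cong_trans)
next
  case (prel p q) thus ?case by (rule emap_rel)
next
  case (pcancel1 e)
  from emap_valid[OF pcancel1(1)] H.cong_cat_rev[of "em e"] show ?case by (cases "em e") simp
next
  case (pcancel2 e)
  from emap_valid[OF pcancel2(1)] H.cong_rev_cat[of "em e"] show ?case by (cases "em e") simp
next
  case (pctx p q u v)
  have "(path_cat (path_subst vm em u) (path_cat (path_subst vm em p) (path_subst vm em v)),
         path_cat (path_subst vm em u) (path_cat (path_subst vm em q) (path_subst vm em v))) \<in> H.cong"
    using pctx by (intro H.cong_cat_left H.cong_cat_right valid_path_subst) (auto dest: H.cong_valid)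
  thus ?case by simp
qed

end

context presentation
begin

context
  fixes \<phi> :: "'v \<Rightarrow> ('v,'e) path" and vm :: "'v \<Rightarrow> 'v" and em :: "'e \<Rightarrow> ('v,'e) path"
  assumes conj_vertex: "\<And>v. v \<in> V \<Longrightarrow> valid (\<phi> v) \<and> path_src (\<phi> v) = v \<and> path_tgt (\<phi> v) = vm v"
    and conj_edge: "\<And>e. e \<in> E \<Longrightarrow> (em e, path_cat (path_rev (\<phi> (s e))) (path_cat (edge_path s t e) (\<phi> (t e)))) \<in> cong"
begin

lemma path_subst_letter_conjugate:
  assumes "valid (a,[x],c)"
  shows "(path_subst vm em (a,[x],c), path_cat (path_rev (\<phi> a)) (path_cat (a,[x],c) (\<phi> c))) \<in> cong"
proof -
  obtain e d where x: "x = (e,d)" by force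
  have e: "e \<in> E" and ac: "a \<in> V" "c \<in> V" using assms x by (cases d; auto simp: valid_iff)+
  have em_ends: "path_src (em e) = vm (s e)" "path_tgt (em e) = vm (t e)"
    using cong_valid[OF conj_edge[OF e]] conj_vertex edge_ends[OF e] by auto
  show ?thesis
  proof (cases d)
    case True
    hence "s e = a" "t e = c" using assms x by (auto simp: valid_iff)
    thus ?thesis using conj_edge[OF e] em_ends x True by (cases "em e") simp
  next
    case False
    hence h: "s e = c" "t e = a" using assms x by (auto simp: valid_iff)
    have "path_rev (path_cat (path_rev (\<phi> c)) (path_cat (edge_path s t e) (\<phi> a)))
        = path_cat (path_rev (\<phi> a)) (path_cat (a,[x],c) (\<phi> c))"
      using h x False conj_vertex[OF ac(1)] conj_vertex[OF ac(2)] by (cases "\<phi> a"; cases "\<phi> c") simp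
    thus ?thesis using cong_rev[OF conj_edge[OF e]] h em_ends x False by (cases "em e") simp
  qed
qed

lemma path_subst_conjugate:
  "valid p \<Longrightarrow> (path_subst vm em p, path_cat (path_rev (\<phi> (path_src p))) (path_cat p (\<phi> (path_tgt p)))) \<in> cong"
proof (induction "fst (snd p)" arbitrary: p)
  case Nil
  then obtain a where p: "p = (a,[],a)" "a \<in> V" by (cases p) (auto simp: valid_iff)
  from cong_rev_cat[of "\<phi> a"] conj_vertex[OF p(2)] show ?case
    unfolding p(1) by (simp add: cong_sym)
next
  case (Cons x w)
  obtain a b where p: "p = (a, x # w, b)" using Cons.hyps(2) by (cases p) auto
  from Cons.prems obtain c where x: "valid (a,[x],c)" and w: "valid (c,w,b)"
    unfolding p by (rule valid_Cons_split)
  have abc: "valid (\<phi> a)" "valid (\<phi> b)" "valid (\<phi> c)"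
    using conj_vertex valid_ends[OF x] valid_ends[OF w] by auto
  have "(path_subst vm em p, path_cat (path_cat (path_rev (\<phi> a)) (path_cat (a,[x],c) (\<phi> c)))
           (path_cat (path_rev (\<phi> c)) (path_cat (c,w,b) (\<phi> b)))) \<in> cong"
    using cong_cat[OF path_subst_letter_conjugate[OF x] Cons.hyps(1)[of "(c,w,b)"]] w p by simp
  also have "(path_cat (path_cat (path_rev (\<phi> a)) (path_cat (a,[x],c) (\<phi> c)))
           (path_cat (path_rev (\<phi> c)) (path_cat (c,w,b) (\<phi> b))),
      path_cat (path_cat (path_rev (\<phi> a)) (a,[x],c)) (path_cat (c,w,b) (\<phi> b))) \<in> cong"
  proof -
    have "valid (path_cat (path_rev (\<phi> a)) (a,[x],c))" "valid (path_cat (c,w,b) (\<phi> b))"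
      using abc x w conj_vertex valid_ends[OF x] valid_ends[OF w] by (auto intro!: valid_path_cat valid_path_rev)
    from cong_cancel_mid[OF this(1) abc(3) this(2)] show ?thesis
      using conj_vertex valid_ends[OF x] by (simp add: path_cat_assoc)
  qed
  finally show ?case using p by (cases "\<phi> b") (simp add: path_cat_assoc)
qed

end

abbreviation "pgpd \<equiv> pres_gpd V E s t R"
abbreviation "cls \<equiv> pclass V E s t R"

lemma cls_mem: "valid p \<Longrightarrow> p \<in> cls p"
  by (simp add: pclass_def cong_refl)

lemma cls_eq_iff: "valid p \<Longrightarrow> valid q \<Longrightarrow> cls p = cls q \<longleftrightarrow> (p,q) \<in> cong"
  unfolding pclass_def using cong_refl by (blast intro: cong_trans cong_sym)

lemma cong_some_cls: "valid p \<Longrightarrow> (p, SOME q. q \<in> cls p) \<in> cong"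
  using someI[of "\<lambda>q. q \<in> cls p" p] cls_mem by (simp add: pclass_def)

lemma pgpd_Obj: "Obj pgpd = V" by (simp add: pres_gpd_def)
lemma pgpd_Arr: "Arr pgpd = {cls p | p. valid p}" by (simp add: pres_gpd_def)

lemma pgpd_dom: "valid p \<Longrightarrow> dom pgpd (cls p) = path_src p"
  using cong_some_cls cong_valid by (fastforce simp: pres_gpd_def)

lemma pgpd_cod: "valid p \<Longrightarrow> cod pgpd (cls p) = path_tgt p"
  using cong_some_cls cong_valid by (fastforce simp: pres_gpd_def)

lemma pgpd_ide: "ide pgpd a = cls (a,[],a)" by (simp add: pres_gpd_def)

lemma pgpd_cmp:
  assumes "valid p" "valid q" "path_tgt p = path_src q"
  shows "cmp pgpd (cls q) (cls p) = cls (path_cat p q)"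
proof -
  have "(path_cat p q, path_cat (SOME r. r \<in> cls p) (SOME r. r \<in> cls q)) \<in> cong"
    using cong_cat[OF cong_some_cls cong_some_cls] assms by simp
  thus ?thesis using cong_valid cls_eq_iff by (simp add: pres_gpd_def) blast
qed

lemma pgpd_hom: "hom pgpd a b = {cls p | p. valid p \<and> path_src p = a \<and> path_tgt p = b}"
  by (auto simp: hom_def pgpd_Arr pgpd_dom pgpd_cod)

end

context presentation_map
begin

definition induced_arr where "induced_arr X = H.cls (path_subst vm em (SOME p. p \<in> X))"

lemma induced_arr_cls: "G.valid p \<Longrightarrow> induced_arr (G.cls p) = H.cls (path_subst vm em p)"
  unfolding induced_arr_def using cong_subst[OF G.cong_some_cls] H.cls_eq_iff H.cong_valid by blast

lemma is_functor_induced: "is_functor G.pgpd H.pgpd vm induced_arr"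
  unfolding is_functor_def
proof (intro conjI ballI impI)
  fix f assume "f \<in> Arr G.pgpd"
  then obtain p where p: "G.valid p" "f = G.cls p" by (auto simp: G.pgpd_Arr)
  show "induced_arr f \<in> Arr H.pgpd"
    using valid_path_subst[OF p(1)] unfolding p(2) induced_arr_cls[OF p(1)] H.pgpd_Arr by blast
  show "dom H.pgpd (induced_arr f) = vm (dom G.pgpd f)" "cod H.pgpd (induced_arr f) = vm (cod G.pgpd f)"
    using valid_path_subst[OF p(1)] by (simp_all add: p induced_arr_cls H.pgpd_dom H.pgpd_cod G.pgpd_dom G.pgpd_cod)
next
  fix f g assume "f \<in> Arr G.pgpd" "g \<in> Arr G.pgpd" "cod G.pgpd f = dom G.pgpd g"
  then obtain p q where "G.valid p" "f = G.cls p" "G.valid q" "g = G.cls q" "path_tgt p = path_src q"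
    by (auto simp: G.pgpd_Arr G.pgpd_dom G.pgpd_cod)
  thus "induced_arr (cmp G.pgpd g f) = cmp H.pgpd (induced_arr g) (induced_arr f)"
    by (simp add: G.pgpd_cmp H.pgpd_cmp induced_arr_cls G.valid_path_cat valid_path_subst)
next
  fix a assume "a \<in> Obj G.pgpd"
  hence "G.valid (a,[],a)" by (simp add: G.pgpd_Obj G.valid_iff)
  thus "induced_arr (ide G.pgpd a) = ide H.pgpd (vm a)" by (simp add: G.pgpd_ide H.pgpd_ide induced_arr_cls)
qed (simp add: G.pgpd_Obj H.pgpd_Obj vmap_closed)

lemma inj_on_induced_arr:
  assumes faithful: "\<And>p q. G.valid p \<Longrightarrow> G.valid q \<Longrightarrow> path_src p = path_src q \<Longrightarrow> path_tgt p = path_tgt q \<Longrightarrow>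
      (path_subst vm em p, path_subst vm em q) \<in> H.cong \<Longrightarrow> (p,q) \<in> G.cong"
  shows "inj_on induced_arr (hom G.pgpd a b)"
proof (rule inj_onI)
  fix X Y assume "X \<in> hom G.pgpd a b" "Y \<in> hom G.pgpd a b" and e: "induced_arr X = induced_arr Y"
  then obtain p q where pq: "G.valid p" "X = G.cls p" "path_src p = a" "path_tgt p = b"
    "G.valid q" "Y = G.cls q" "path_src q = a" "path_tgt q = b" unfolding G.pgpd_hom by blast
  have "(path_subst vm em p, path_subst vm em q) \<in> H.cong"
    using e pq H.cls_eq_iff valid_path_subst by (simp add: induced_arr_cls)
  thus "X = Y" using faithful pq G.cls_eq_iff by simp
qed

lemma induced_arr_hom_image:
  assumes full: "\<And>P. H.valid P \<Longrightarrow> path_src P = vm a \<Longrightarrow> path_tgt P = vm b \<Longrightarrow>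
      \<exists>p. G.valid p \<and> path_src p = a \<and> path_tgt p = b \<and> (path_subst vm em p, P) \<in> H.cong"
  shows "induced_arr ` hom G.pgpd a b = hom H.pgpd (vm a) (vm b)"
proof
  show "induced_arr ` hom G.pgpd a b \<subseteq> hom H.pgpd (vm a) (vm b)"
    using valid_path_subst by (auto simp: G.pgpd_hom H.pgpd_hom induced_arr_cls)
next
  show "hom H.pgpd (vm a) (vm b) \<subseteq> induced_arr ` hom G.pgpd a b"
  proof
    fix Z assume "Z \<in> hom H.pgpd (vm a) (vm b)"
    then obtain P where P: "H.valid P" "Z = H.cls P" "path_src P = vm a" "path_tgt P = vm b"
      unfolding H.pgpd_hom by blast
    obtain p where p: "G.valid p" "path_src p = a" "path_tgt p = b" "(path_subst vm em p, P) \<in> H.cong"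
      using full[OF P(1,3,4)] by blast
    have "induced_arr (G.cls p) = Z"
      using p P H.cls_eq_iff valid_path_subst by (simp add: induced_arr_cls)
    moreover have "G.cls p \<in> hom G.pgpd a b" using p unfolding G.pgpd_hom by blast
    ultimately show "Z \<in> induced_arr ` hom G.pgpd a b" by blast
  qed
qed

lemma is_equivalence_induced:
  assumes faithful: "\<And>p q. G.valid p \<Longrightarrow> G.valid q \<Longrightarrow> path_src p = path_src q \<Longrightarrow> path_tgt p = path_tgt q \<Longrightarrow>
      (path_subst vm em p, path_subst vm em q) \<in> H.cong \<Longrightarrow> (p,q) \<in> G.cong"
  and full: "\<And>a b P. a \<in> V \<Longrightarrow> b \<in> V \<Longrightarrow> H.valid P \<Longrightarrow> path_src P = vm a \<Longrightarrow> path_tgt P = vm b \<Longrightarrow>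
      \<exists>p. G.valid p \<and> path_src p = a \<and> path_tgt p = b \<and> (path_subst vm em p, P) \<in> H.cong"
  and surj: "vm ` V = V'"
  shows "is_equivalence G.pgpd H.pgpd vm induced_arr"
  unfolding is_equivalence_def
proof (intro conjI ballI is_functor_induced)
  fix a b assume "a \<in> Obj G.pgpd" "b \<in> Obj G.pgpd"
  thus "bij_betw induced_arr (hom G.pgpd a b) (hom H.pgpd (vm a) (vm b))"
    unfolding bij_betw_def G.pgpd_Obj
    using inj_on_induced_arr[OF faithful] induced_arr_hom_image full by blast
next
  fix y assume "y \<in> Obj H.pgpd"
  then obtain x where x: "x \<in> V" "vm x = y" using surj unfolding H.pgpd_Obj by blast
  hence "H.cls (y,[],y) \<in> hom H.pgpd (vm x) y"
    using vmap_closed unfolding H.pgpd_hom by (intro CollectI exI[of _ "(y,[],y)"]) (auto simp: H.valid_iff)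
  thus "\<exists>x\<in>Obj G.pgpd. hom H.pgpd (vm x) y \<noteq> {}" using x unfolding G.pgpd_Obj by blast
qed

end

section \<open>Diagrams of groupoids on the proper subsets of \<open>{1..n}\<close>\<close>

locale diagram =
  fixes n :: nat and Phi :: "nat set \<Rightarrow> ('o,'m) gpd"
    and PhiO :: "nat set \<Rightarrow> nat set \<Rightarrow> 'o \<Rightarrow> 'o"
    and PhiM :: "nat set \<Rightarrow> nat set \<Rightarrow> 'm \<Rightarrow> 'm"
  assumes diag: "gpd_diagram (Bsets {1..n}) Phi PhiO PhiM"
begin

abbreviation "B \<equiv> Bsets {1..n}"

lemma is_gpd_Phi: "X \<in> B \<Longrightarrow> is_gpd (Phi X)"
  using diag by (simp add: gpd_diagram_def)

lemma is_functor_Phi: "X \<in> B \<Longrightarrow> Y \<in> B \<Longrightarrow> X \<subseteq> Y \<Longrightarrow> is_functor (Phi X) (Phi Y) (PhiO X Y) (PhiM X Y)"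
  using diag by (simp add: gpd_diagram_def)

lemma PhiO_id: "X \<in> B \<Longrightarrow> x \<in> Obj (Phi X) \<Longrightarrow> PhiO X X x = x"
  using diag by (simp add: gpd_diagram_def)

lemma PhiM_id: "X \<in> B \<Longrightarrow> f \<in> Arr (Phi X) \<Longrightarrow> PhiM X X f = f"
  using diag by (simp add: gpd_diagram_def)

lemma PhiO_comp:
  "X \<in> B \<Longrightarrow> Y \<in> B \<Longrightarrow> Z \<in> B \<Longrightarrow> X \<subseteq> Y \<Longrightarrow> Y \<subseteq> Z \<Longrightarrow> x \<in> Obj (Phi X) \<Longrightarrow>
   PhiO Y Z (PhiO X Y x) = PhiO X Z x"
  using diag unfolding gpd_diagram_def by blast

lemma PhiO_Obj: "X \<in> B \<Longrightarrow> Y \<in> B \<Longrightarrow> X \<subseteq> Y \<Longrightarrow> x \<in> Obj (Phi X) \<Longrightarrow> PhiO X Y x \<in> Obj (Phi Y)"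
  using is_functor_Phi by (simp add: is_functor_def)

lemma PhiM_Arr:
  "X \<in> B \<Longrightarrow> Y \<in> B \<Longrightarrow> X \<subseteq> Y \<Longrightarrow> f \<in> Arr (Phi X) \<Longrightarrow>
   PhiM X Y f \<in> Arr (Phi Y) \<and> dom (Phi Y) (PhiM X Y f) = PhiO X Y (dom (Phi X) f) \<and>
   cod (Phi Y) (PhiM X Y f) = PhiO X Y (cod (Phi X) f)"
  using is_functor_Phi by (simp add: is_functor_def)

lemma PhiM_ide:
  "X \<in> B \<Longrightarrow> Y \<in> B \<Longrightarrow> X \<subseteq> Y \<Longrightarrow> x \<in> Obj (Phi X) \<Longrightarrow> PhiM X Y (ide (Phi X) x) = ide (Phi Y) (PhiO X Y x)"
  using is_functor_Phi by (simp add: is_functor_def)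

lemma ide_Arr:
  "X \<in> B \<Longrightarrow> x \<in> Obj (Phi X) \<Longrightarrow>
   ide (Phi X) x \<in> Arr (Phi X) \<and> dom (Phi X) (ide (Phi X) x) = x \<and> cod (Phi X) (ide (Phi X) x) = x"
  using is_gpd_Phi by (simp add: is_gpd_def)

lemma dom_cod_Obj: "X \<in> B \<Longrightarrow> f \<in> Arr (Phi X) \<Longrightarrow> dom (Phi X) f \<in> Obj (Phi X) \<and> cod (Phi X) f \<in> Obj (Phi X)"
  using is_gpd_Phi by (simp add: is_gpd_def)

lemma cmp_Arr:
  "X \<in> B \<Longrightarrow> f \<in> Arr (Phi X) \<Longrightarrow> g \<in> Arr (Phi X) \<Longrightarrow> cod (Phi X) f = dom (Phi X) g \<Longrightarrow>
   cmp (Phi X) g f \<in> Arr (Phi X) \<and> dom (Phi X) (cmp (Phi X) g f) = dom (Phi X) f \<and>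
   cod (Phi X) (cmp (Phi X) g f) = cod (Phi X) g"
  using is_gpd_Phi unfolding is_gpd_def by blast

lemma cmp_ide_left: "X \<in> B \<Longrightarrow> f \<in> Arr (Phi X) \<Longrightarrow> cmp (Phi X) (ide (Phi X) (cod (Phi X) f)) f = f"
  using is_gpd_Phi unfolding is_gpd_def by blast

lemma cmp_ide_right: "X \<in> B \<Longrightarrow> f \<in> Arr (Phi X) \<Longrightarrow> cmp (Phi X) f (ide (Phi X) (dom (Phi X) f)) = f"
  using is_gpd_Phi unfolding is_gpd_def by blast

text \<open>\<open>G\<close> refers to the graph presenting the 2-colimit of \<open>Phi\<close> restricted to \<open>I\<close>: the objects
  and morphisms of the Grothendieck construction.\<close>

abbreviation "GObj I \<equiv> tot_obj I Phi"
abbreviation "GEdge I \<equiv> tcolim_E I Phi PhiO"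
abbreviation "GRel I \<equiv> tcolim_R I Phi PhiO PhiM"
abbreviation "GCong I \<equiv> pcong (GObj I) (GEdge I) tcolim_s (tcolim_t Phi) (GRel I)"
abbreviation "GValid I \<equiv> valid_path (GObj I) (GEdge I) tcolim_s (tcolim_t Phi)"
abbreviation "gpath \<equiv> edge_path tcolim_s (tcolim_t Phi)"

lemma tot_obj_iff: "(X,x) \<in> GObj I \<longleftrightarrow> X \<in> I \<and> x \<in> Obj (Phi X)"
  by (simp add: tot_obj_def)

lemma GEdge_iff:
  "(X,x,Y,g) \<in> GEdge I \<longleftrightarrow>
   X \<in> I \<and> Y \<in> I \<and> X \<subseteq> Y \<and> x \<in> Obj (Phi X) \<and> g \<in> Arr (Phi Y) \<and> dom (Phi Y) g = PhiO X Y x"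
  by (simp add: tcolim_E_def)

lemma tcolim_s_simp[simp]: "tcolim_s (X,x,Y,g) = (X,x)" by (simp add: tcolim_s_def)
lemma tcolim_t_simp[simp]: "tcolim_t Phi (X,x,Y,g) = (Y, cod (Phi Y) g)" by (simp add: tcolim_t_def)

lemma presentation_G:
  assumes "I \<subseteq> B" shows "presentation (GObj I) (GEdge I) tcolim_s (tcolim_t Phi)"
proof
  fix e assume "e \<in> GEdge I"
  then obtain X x Y g where "e = (X,x,Y,g)" "X \<in> I" "Y \<in> I" "x \<in> Obj (Phi X)" "g \<in> Arr (Phi Y)"
    by (cases e) (auto simp: GEdge_iff)
  thus "tcolim_s e \<in> GObj I \<and> tcolim_t Phi e \<in> GObj I"
    using dom_cod_Obj assms by (auto simp: tot_obj_iff)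
qed

lemma GObj_mono: "I \<subseteq> J \<Longrightarrow> GObj I \<subseteq> GObj J"
  unfolding tot_obj_def by blast

lemma GEdge_mono: "I \<subseteq> J \<Longrightarrow> GEdge I \<subseteq> GEdge J"
  unfolding tcolim_E_def by blast

lemma GRelE:
  assumes "(p,q) \<in> GRel I"
  obtains (comp) X x Y g Z h
    where "p = ((X,x), [((X,x,Y,g), True), ((Y, cod (Phi Y) g, Z, h), True)], (Z, cod (Phi Z) h))"
      "q = ((X,x), [((X,x,Z, cmp (Phi Z) h (PhiM Y Z g)), True)], (Z, cod (Phi Z) h))"
      "(X,x,Y,g) \<in> GEdge I" "(Y, cod (Phi Y) g, Z, h) \<in> GEdge I"
  | (ide) X x where "p = ((X,x), [((X,x,X, ide (Phi X) x), True)], (X,x))" "q = ((X,x), [], (X,x))"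
      "X \<in> I" "x \<in> Obj (Phi X)"
  using assms unfolding tcolim_R_def by blast

lemma GRel_mono:
  assumes "I \<subseteq> J" shows "GRel I \<subseteq> GRel J"
proof (rule subsetI, clarify)
  fix p q assume "(p,q) \<in> GRel I"
  thus "(p,q) \<in> GRel J"
  proof (cases rule: GRelE)
    case comp thus ?thesis
      using GEdge_mono[OF assms] unfolding tcolim_R_def by (intro UnI1 CollectI exI conjI) auto
  next
    case ide thus ?thesis
      using assms unfolding tcolim_R_def by (intro UnI2 CollectI exI conjI) auto
  qed
qed

lemma GCong_mono: "I \<subseteq> J \<Longrightarrow> GCong I \<subseteq> GCong J"
  by (rule pcong_mono[OF GObj_mono GEdge_mono GRel_mono])

lemma GValid_mono: "I \<subseteq> J \<Longrightarrow> GValid I p \<Longrightarrow> GValid J p"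
  using valid_path_mono[OF _ GObj_mono GEdge_mono] by blast

lemma G_comp_cong:
  assumes I: "I \<subseteq> B" and e1: "(X,x,Y,g) \<in> GEdge I" and e2: "(Y, cod (Phi Y) g, Z, h) \<in> GEdge I"
  shows "(path_cat (gpath (X,x,Y,g)) (gpath (Y, cod (Phi Y) g, Z, h)),
          gpath (X,x,Z, cmp (Phi Z) h (PhiM Y Z g))) \<in> GCong I"
proof -
  interpret G: presentation "GObj I" "GEdge I" tcolim_s "tcolim_t Phi" "GRel I" by (rule presentation_G[OF I])
  have XYZ: "X \<in> B" "Y \<in> B" "Z \<in> B" "X \<subseteq> Y" "Y \<subseteq> Z" "x \<in> Obj (Phi X)" "g \<in> Arr (Phi Y)" "h \<in> Arr (Phi Z)"
    "dom (Phi Y) g = PhiO X Y x" "dom (Phi Z) h = PhiO Y Z (cod (Phi Y) g)"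
    using e1 e2 I by (auto simp: GEdge_iff)
  have "PhiM Y Z g \<in> Arr (Phi Z)" "dom (Phi Z) (PhiM Y Z g) = PhiO X Z x"
    "cod (Phi Z) (PhiM Y Z g) = PhiO Y Z (cod (Phi Y) g)"
    using PhiM_Arr[of Y Z g] XYZ PhiO_comp[of X Y Z x] by auto
  hence c: "cmp (Phi Z) h (PhiM Y Z g) \<in> Arr (Phi Z)" "dom (Phi Z) (cmp (Phi Z) h (PhiM Y Z g)) = PhiO X Z x"
    "cod (Phi Z) (cmp (Phi Z) h (PhiM Y Z g)) = cod (Phi Z) h"
    using cmp_Arr[of Z "PhiM Y Z g" h] XYZ by auto
  have e3: "(X,x,Z, cmp (Phi Z) h (PhiM Y Z g)) \<in> GEdge I"
    using e1 e2 c XYZ by (auto simp: GEdge_iff)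
  have "(path_cat (gpath (X,x,Y,g)) (gpath (Y, cod (Phi Y) g, Z, h)),
         gpath (X,x,Z, cmp (Phi Z) h (PhiM Y Z g))) \<in> GRel I"
    unfolding tcolim_R_def using e1 e2 c by (intro UnI1 CollectI exI conjI) auto
  thus ?thesis
    using G.valid_path_cat[OF G.valid_edge_path[OF e1] G.valid_edge_path[OF e2]] G.valid_edge_path[OF e3] c
    by (intro pcong.prel) simp_all
qed

text \<open>Unit edges are the morphisms of the Grothendieck construction that the comparison functor
  collapses.\<close>

definition unit_edge :: "nat set \<Rightarrow> nat set \<Rightarrow> 'o \<Rightarrow> nat set \<times> 'o \<times> nat set \<times> 'm" where
  "unit_edge X Y x = (X, x, Y, ide (Phi Y) (PhiO X Y x))"

definition unit_path :: "nat set \<Rightarrow> nat set \<Rightarrow> 'o \<Rightarrow> (nat set \<times> 'o, nat set \<times> 'o \<times> nat set \<times> 'm) path" where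
  "unit_path X Y x = ((X,x), [(unit_edge X Y x, True)], (Y, PhiO X Y x))"

definition unit_edges :: "nat set set \<Rightarrow> (nat set \<times> 'o \<times> nat set \<times> 'm) set" where
  "unit_edges I = {unit_edge X Y x | X Y x. X \<in> I \<and> Y \<in> I \<and> X \<subseteq> Y \<and> x \<in> Obj (Phi X)}"

lemma unit_edges_mono: "I \<subseteq> J \<Longrightarrow> unit_edges I \<subseteq> unit_edges J"
  unfolding unit_edges_def by blast

lemma unit_edge_in: "X \<in> I \<Longrightarrow> Y \<in> I \<Longrightarrow> X \<subseteq> Y \<Longrightarrow> x \<in> Obj (Phi X) \<Longrightarrow> unit_edge X Y x \<in> unit_edges I"
  unfolding unit_edges_def by blast

lemma unit_edge_GEdge:
  assumes "I \<subseteq> B" "X \<in> I" "Y \<in> I" "X \<subseteq> Y" "x \<in> Obj (Phi X)"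
  shows "unit_edge X Y x \<in> GEdge I"
proof -
  have "PhiO X Y x \<in> Obj (Phi Y)" using PhiO_Obj assms by blast
  thus ?thesis using ide_Arr[of Y] assms by (auto simp: unit_edge_def GEdge_iff)
qed

lemma gpath_unit_edge:
  assumes "X \<in> B" "Y \<in> B" "X \<subseteq> Y" "x \<in> Obj (Phi X)"
  shows "gpath (unit_edge X Y x) = unit_path X Y x"
  using ide_Arr[of Y] PhiO_Obj assms by (simp add: unit_edge_def unit_path_def)

lemma valid_unit_path:
  assumes "I \<subseteq> B" "X \<in> I" "Y \<in> I" "X \<subseteq> Y" "x \<in> Obj (Phi X)"
  shows "GValid I (unit_path X Y x)"
proof -
  interpret G: presentation "GObj I" "GEdge I" tcolim_s "tcolim_t Phi" "GRel I" by (rule presentation_G[OF assms(1)])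
  have XY: "X \<in> B" "Y \<in> B" using assms by blast+
  from G.valid_edge_path[OF unit_edge_GEdge[OF assms]] show ?thesis
    unfolding gpath_unit_edge[OF XY assms(4,5)] .
qed

lemma unit_path_ends[simp]:
  "path_src (unit_path X Y x) = (X,x)" "path_tgt (unit_path X Y x) = (Y, PhiO X Y x)"
  by (simp_all add: unit_path_def)

lemma unit_path_edge:
  assumes I: "I \<subseteq> B" and e: "(X,x,Y,g) \<in> GEdge I"
  shows "(path_cat (unit_path X Y x) (gpath (Y, PhiO X Y x, Y, g)), gpath (X,x,Y,g)) \<in> GCong I"
proof -
  have h: "X \<in> I" "Y \<in> I" "X \<subseteq> Y" "x \<in> Obj (Phi X)" "g \<in> Arr (Phi Y)" "dom (Phi Y) g = PhiO X Y x"
    using e by (simp_all add: GEdge_iff)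
  have B: "X \<in> B" "Y \<in> B" using h I by blast+
  define y where "y = PhiO X Y x"
  have y: "y \<in> Obj (Phi Y)" using PhiO_Obj B h y_def by blast
  have e1: "(X,x,Y,ide (Phi Y) y) \<in> GEdge I"
    using unit_edge_GEdge[OF I h(1-4)] by (simp add: unit_edge_def y_def)
  have cy: "cod (Phi Y) (ide (Phi Y) y) = y" using ide_Arr B y by blast
  have e2: "(Y, cod (Phi Y) (ide (Phi Y) y), Y, g) \<in> GEdge I"
    using e y B PhiO_id[OF B(2) y] h cy unfolding y_def by (simp add: GEdge_iff)
  have "PhiM Y Y (ide (Phi Y) y) = ide (Phi Y) y" using PhiM_id B ide_Arr y by blast
  moreover have "cmp (Phi Y) g (ide (Phi Y) y) = g" using cmp_ide_right[of Y g] h B y_def by simp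
  ultimately show ?thesis
    using G_comp_cong[OF I e1 e2] unfolding cy by (simp add: unit_path_def unit_edge_def y_def[symmetric])
qed

lemma unit_path_comp:
  assumes I: "I \<subseteq> B" and XYZ: "X \<in> I" "Y \<in> I" "Z \<in> I" "X \<subseteq> Y" "Y \<subseteq> Z" "x \<in> Obj (Phi X)"
  shows "(path_cat (unit_path X Y x) (unit_path Y Z (PhiO X Y x)), unit_path X Z x) \<in> GCong I"
proof -
  have B: "X \<in> B" "Y \<in> B" "Z \<in> B" using XYZ I by blast+
  define y where "y = PhiO X Y x"
  define z where "z = PhiO Y Z y"
  have y: "y \<in> Obj (Phi Y)" and z: "z \<in> Obj (Phi Z)" using PhiO_Obj B XYZ y_def z_def by blast+
  have e1: "(X,x,Y,ide (Phi Y) y) \<in> GEdge I"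
    using unit_edge_GEdge[OF I XYZ(1,2,4,6)] by (simp add: unit_edge_def y_def)
  have cy: "cod (Phi Y) (ide (Phi Y) y) = y" using ide_Arr B y by blast
  have e2: "(Y, cod (Phi Y) (ide (Phi Y) y), Z, ide (Phi Z) z) \<in> GEdge I"
    using unit_edge_GEdge[OF I XYZ(2,3,5) y] cy by (simp add: unit_edge_def z_def)
  have "PhiM Y Z (ide (Phi Y) y) = ide (Phi Z) z" using PhiM_ide B XYZ y z_def by simp
  moreover have "cmp (Phi Z) (ide (Phi Z) z) (ide (Phi Z) z) = ide (Phi Z) z"
    using cmp_ide_left[OF B(3), of "ide (Phi Z) z"] ide_Arr[OF B(3) z] by simp
  ultimately show ?thesis
    using G_comp_cong[OF I e1 e2] ide_Arr[OF B(3) z] PhiO_comp[OF B XYZ(4,5,6)]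
    unfolding cy by (simp add: unit_path_def unit_edge_def y_def[symmetric] z_def[symmetric])
qed

lemma unit_path_id:
  assumes I: "I \<subseteq> B" and X: "X \<in> I" "x \<in> Obj (Phi X)"
  shows "(unit_path X X x, ((X,x),[],(X,x))) \<in> GCong I"
proof -
  have "(unit_path X X x, ((X,x),[],(X,x))) \<in> GRel I"
    unfolding tcolim_R_def unit_path_def unit_edge_def using X PhiO_id I by (intro UnI2 CollectI exI conjI) auto
  moreover have "GValid I (unit_path X X x)" using valid_unit_path[OF I X(1) X(1) _ X(2)] by simp
  moreover have "PhiO X X x = x" using PhiO_id I X by blast
  ultimately show ?thesis using X by (intro pcong.prel) (auto simp: valid_path_def tot_obj_iff)
qed

definition contraction :: "nat set set \<Rightarrow> (nat set \<times> 'o \<Rightarrow> (nat set \<times> 'o, nat set \<times> 'o \<times> nat set \<times> 'm) path) \<Rightarrow> bool" where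
  "contraction I \<theta> \<longleftrightarrow>
     (\<forall>p\<in>GObj I. GValid I (\<theta> p) \<and> path_src (\<theta> p) = p \<and> fst ` set (fst (snd (\<theta> p))) \<subseteq> unit_edges I) \<and>
     (\<forall>X Y x. X \<in> I \<longrightarrow> Y \<in> I \<longrightarrow> X \<subseteq> Y \<longrightarrow> x \<in> Obj (Phi X) \<longrightarrow>
        (path_cat (unit_path X Y x) (\<theta> (Y, PhiO X Y x)), \<theta> (X,x)) \<in> GCong I)"

lemma contractionD:
  assumes "contraction I \<theta>"
  shows "p \<in> GObj I \<Longrightarrow> GValid I (\<theta> p) \<and> path_src (\<theta> p) = p \<and> fst ` set (fst (snd (\<theta> p))) \<subseteq> unit_edges I"
    and "X \<in> I \<Longrightarrow> Y \<in> I \<Longrightarrow> X \<subseteq> Y \<Longrightarrow> x \<in> Obj (Phi X) \<Longrightarrow>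
        (path_cat (unit_path X Y x) (\<theta> (Y, PhiO X Y x)), \<theta> (X,x)) \<in> GCong I"
  using assms unfolding contraction_def by blast+

lemma obj_stepI:
  "X \<in> I \<Longrightarrow> Y \<in> I \<Longrightarrow> X \<subseteq> Y \<Longrightarrow> x \<in> Obj (Phi X) \<Longrightarrow> ((X,x),(Y,PhiO X Y x)) \<in> obj_step I Phi PhiO"
  unfolding obj_step_def by blast

lemma obj_step_GObj:
  assumes "I \<subseteq> B" "(p,q) \<in> obj_step I Phi PhiO" shows "p \<in> GObj I \<and> q \<in> GObj I"
proof -
  obtain X Y x where "p = (X,x)" "q = (Y, PhiO X Y x)" "X \<in> I" "Y \<in> I" "X \<subseteq> Y" "x \<in> Obj (Phi X)"
    using assms(2) unfolding obj_step_def by blast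
  thus ?thesis using PhiO_Obj[of X Y x] assms(1) by (auto simp: tot_obj_iff)
qed

lemma obj_eq_invariant:
  assumes I: "I \<subseteq> B" and inv: "\<And>a b. (a,b) \<in> obj_step I Phi PhiO \<Longrightarrow> f a = f b"
    and pq: "(p,q) \<in> obj_eq I Phi PhiO"
  shows "f p = f q \<and> q \<in> GObj I"
proof -
  have p: "p \<in> GObj I" and "(p,q) \<in> (obj_step I Phi PhiO \<union> (obj_step I Phi PhiO)\<inverse>)\<^sup>*"
    using pq unfolding obj_eq_def by blast+
  from this(2) show ?thesis
  proof (induction rule: rtrancl_induct)
    case (step q r)
    from step.hyps(2) have "f q = f r \<and> r \<in> GObj I"
    proof
      assume "(q,r) \<in> obj_step I Phi PhiO" thus ?thesis using inv obj_step_GObj[OF I] by blast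
    next
      assume "(q,r) \<in> (obj_step I Phi PhiO)\<inverse>"
      hence "(r,q) \<in> obj_step I Phi PhiO" by simp
      thus ?thesis using inv obj_step_GObj[OF I] by metis
    qed
    thus ?case using step.IH by simp
  qed (use p in simp)
qed

lemma obj_eq_equiv:
  assumes I: "I \<subseteq> B" shows "equiv (GObj I) (obj_eq I Phi PhiO)"
proof (rule equivI)
  show "obj_eq I Phi PhiO \<subseteq> GObj I \<times> GObj I"
    using obj_eq_invariant[OF I, of "\<lambda>_. ()"] unfolding obj_eq_def by blast
next
  show "refl_on (GObj I) (obj_eq I Phi PhiO)"
    unfolding refl_on_def obj_eq_def by blast
next
  let ?S = "obj_step I Phi PhiO \<union> (obj_step I Phi PhiO)\<inverse>"
  show "sym (obj_eq I Phi PhiO)"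
  proof (rule symI)
    fix p q assume pq: "(p,q) \<in> obj_eq I Phi PhiO"
    have "(q,p) \<in> (?S\<inverse>)\<^sup>*" using pq unfolding obj_eq_def by (simp add: rtrancl_converse)
    moreover have "?S\<inverse> = ?S" by (simp add: converse_Un Un_commute)
    ultimately show "(q,p) \<in> obj_eq I Phi PhiO"
      using obj_eq_invariant[OF I, of "\<lambda>_. ()" p q] pq unfolding obj_eq_def by simp
  qed
next
  show "trans (obj_eq I Phi PhiO)"
    unfolding obj_eq_def by (blast intro: transI rtrancl_trans)
qed

lemma obj_eq_stepI:
  "I \<subseteq> B \<Longrightarrow> X \<in> I \<Longrightarrow> Y \<in> I \<Longrightarrow> X \<subseteq> Y \<Longrightarrow> x \<in> Obj (Phi X) \<Longrightarrow> ((X,x),(Y,PhiO X Y x)) \<in> obj_eq I Phi PhiO"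
  unfolding obj_eq_def using obj_stepI[of X I Y x] by (auto simp: tot_obj_iff)

definition obj_inj :: "nat set \<Rightarrow> nat set \<Rightarrow> bool" where
  "obj_inj V U \<longleftrightarrow> (\<forall>p\<in>GObj (Bsets_rel V U). \<forall>q\<in>GObj (Bsets_rel V U).
     PhiO (fst p) V (snd p) = PhiO (fst q) V (snd q) \<longrightarrow> (p,q) \<in> obj_eq (Bsets_rel V U) Phi PhiO)"

lemma obj_inj_cond_A:
  assumes V: "V \<in> B" and c: "cond_A Phi PhiO PhiM V U"
  shows "obj_inj V U"
proof -
  let ?A = "Bsets_rel V U"
  let ?f = "\<lambda>p. PhiO (fst p) V (snd p)"
  let ?cl = "\<lambda>p. obj_eq ?A Phi PhiO `` {p}"
  have AB: "?A \<subseteq> B" using V unfolding Bsets_def Bsets_rel_def by blast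
  have inv: "?f a = ?f b" if ab: "(a,b) \<in> obj_step ?A Phi PhiO" for a b
  proof -
    obtain X Y x where h: "a = (X,x)" "b = (Y, PhiO X Y x)" "X \<in> ?A" "Y \<in> ?A" "X \<subseteq> Y" "x \<in> Obj (Phi X)"
      using ab unfolding obj_step_def by blast
    have "X \<in> B" "Y \<in> B" using h AB by blast+
    moreover have "Y \<subseteq> V" using h(4) unfolding Bsets_rel_def by blast
    ultimately show ?thesis using PhiO_comp[OF _ _ V h(5)] h by simp
  qed
  have canon: "canon_obj PhiO V (?cl p) = ?f p" if p: "p \<in> GObj ?A" for p
  proof -
    have "p \<in> ?cl p" using p unfolding obj_eq_def by blast
    hence "(SOME q. q \<in> ?cl p) \<in> ?cl p" by (rule someI)
    hence "(p, SOME q. q \<in> ?cl p) \<in> obj_eq ?A Phi PhiO" by simp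
    hence "?f p = ?f (SOME q. q \<in> ?cl p)" using obj_eq_invariant[OF AB, of ?f] inv by blast
    thus ?thesis unfolding canon_obj_def by (simp add: case_prod_beta)
  qed
  have inj: "inj_on (canon_obj PhiO V) (GObj ?A // obj_eq ?A Phi PhiO)"
    using c unfolding cond_A_def colim_gpd_def by (simp add: pres_gpd_def colim_V_def)
  show ?thesis unfolding obj_inj_def
  proof (intro ballI impI)
    fix p q assume p: "p \<in> GObj ?A" and q: "q \<in> GObj ?A" and "?f p = ?f q"
    hence "canon_obj PhiO V (?cl p) = canon_obj PhiO V (?cl q)" using canon by simp
    hence "?cl p = ?cl q" by (rule inj_onD[OF inj _ quotientI[OF p] quotientI[OF q]])
    thus "(p,q) \<in> obj_eq ?A Phi PhiO" using eq_equiv_class_iff[OF obj_eq_equiv[OF AB] p q] by blast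
  qed
qed

end

section \<open>Constructing a contraction stage by stage\<close>

definition (in diagram) stage :: "nat \<Rightarrow> nat set set" where
  "stage m = Bsets_rel {1..n} {m+1..n}"

lemma (in diagram) stage_subset: "stage m \<subseteq> B"
  by (auto simp: stage_def Bsets_rel_def Bsets_def)

locale contraction_step = diagram n Phi PhiO PhiM
  for n and Phi :: "nat set \<Rightarrow> ('o,'m) gpd" and PhiO PhiM +
  fixes m :: nat and \<theta>' :: "nat set \<times> 'o \<Rightarrow> (nat set \<times> 'o, nat set \<times> 'o \<times> nat set \<times> 'm) path"
  assumes m_pos: "1 \<le> m" and m_le: "m \<le> n"
    and prev_contr: "contraction (stage (m-1)) \<theta>'"
    and inj: "obj_inj ({1..n} - {m}) {m+1..n}"
begin

abbreviation "Cur \<equiv> stage m"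
abbreviation "Prev \<equiv> stage (m-1)"
abbreviation "Top \<equiv> {1..n} - {m}"
abbreviation "Below \<equiv> Bsets_rel Top {m+1..n}"

lemma Cur_iff: "X \<in> Cur \<longleftrightarrow> {m+1..n} \<subseteq> X \<and> X \<subseteq> {1..n} \<and> X \<noteq> {1..n}"
  by (auto simp: stage_def Bsets_rel_def)

lemma Prev_iff: "X \<in> Prev \<longleftrightarrow> insert m {m+1..n} \<subseteq> X \<and> X \<subseteq> {1..n} \<and> X \<noteq> {1..n}"
proof -
  have "{m - 1 + 1..n} = insert m {m+1..n}" using m_pos m_le by auto
  thus ?thesis by (simp add: stage_def Bsets_rel_def psubset_eq)
qed

lemma Below_iff: "X \<in> Below \<longleftrightarrow> X \<in> Cur \<and> X \<subseteq> Top \<and> X \<noteq> Top"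
  unfolding Cur_iff Bsets_rel_def by blast

lemma Cur_subset: "Cur \<subseteq> B"
  by (rule stage_subset)

lemma Prev_subset: "Prev \<subseteq> Cur"
proof
  fix X assume "X \<in> Prev" thus "X \<in> Cur" unfolding Prev_iff Cur_iff by blast
qed

lemma Below_subset: "Below \<subseteq> Cur"
proof
  fix X assume "X \<in> Below" thus "X \<in> Cur" unfolding Below_iff by blast
qed

lemma Top_Cur: "Top \<in> Cur"
proof -
  have "m \<in> {1..n}" "{m+1..n} \<subseteq> {1..n} - {m}" using m_pos m_le by (auto simp: subset_iff)
  thus ?thesis unfolding Cur_iff by blast
qed

lemma Prev_iff_m: "X \<in> Cur \<Longrightarrow> X \<in> Prev \<longleftrightarrow> m \<in> X"
  unfolding Cur_iff Prev_iff by blast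

lemma Cur_not_Prev: "X \<in> Cur \<Longrightarrow> X \<notin> Prev \<Longrightarrow> X \<subseteq> Top"
  unfolding Cur_iff Prev_iff by blast

lemma Top_notin_Prev: "Top \<notin> Prev"
  unfolding Prev_iff by blast

lemma insert_m_Prev:
  assumes "X \<in> Below" shows "insert m X \<in> Prev"
proof -
  have X: "{m+1..n} \<subseteq> X" "X \<subseteq> Top" "X \<noteq> Top" using assms unfolding Below_iff Cur_iff by blast+
  have "m \<in> {1..n}" using m_pos m_le by simp
  moreover have "insert m X \<noteq> {1..n}"
  proof
    assume "insert m X = {1..n}"
    hence "Top \<subseteq> X" by blast
    thus False using X by blast
  qed
  ultimately show ?thesis unfolding Prev_iff using X by blast
qed

lemma Prev_upward: "X \<in> Prev \<Longrightarrow> Y \<in> Cur \<Longrightarrow> X \<subseteq> Y \<Longrightarrow> Y \<in> Prev"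
  using Prev_iff_m Prev_subset by blast

lemma Top_maximal:
  assumes "Top \<subseteq> Y" "Y \<in> Cur" shows "Y = Top"
proof -
  have "m \<notin> Y"
  proof
    assume "m \<in> Y" hence "{1..n} \<subseteq> Y" using assms by blast
    thus False using assms unfolding Cur_iff by blast
  qed
  thus ?thesis using assms Cur_not_Prev Prev_iff_m by blast
qed

sublocale LG: presentation "GObj Cur" "GEdge Cur" tcolim_s "tcolim_t Phi" "GRel Cur"
  by (rule presentation_G[OF Cur_subset])

lemma prev_contr_valid:
  assumes "p \<in> GObj Prev"
  shows "GValid Cur (\<theta>' p) \<and> path_src (\<theta>' p) = p \<and> fst ` set (fst (snd (\<theta>' p))) \<subseteq> unit_edges Cur"
  using contractionD(1)[OF prev_contr assms] GValid_mono[OF Prev_subset] unit_edges_mono[OF Prev_subset] by blast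

lemma prev_contr_edge:
  "X \<in> Prev \<Longrightarrow> Y \<in> Prev \<Longrightarrow> X \<subseteq> Y \<Longrightarrow> x \<in> Obj (Phi X) \<Longrightarrow>
   (path_cat (unit_path X Y x) (\<theta>' (Y, PhiO X Y x)), \<theta>' (X,x)) \<in> GCong Cur"
  using contractionD(2)[OF prev_contr] GCong_mono[OF Prev_subset] by blast

definition via_prev where
  "via_prev X x = path_cat (unit_path X (insert m X) x) (\<theta>' (insert m X, PhiO X (insert m X) x))"

definition via_top where
  "via_top X x = path_cat (path_rev (unit_path X Top x)) (via_prev X x)"

lemma via_prev_valid:
  assumes X: "X \<in> Below" and x: "x \<in> Obj (Phi X)"
  shows "GValid Cur (via_prev X x) \<and> path_src (via_prev X x) = (X,x) \<and>
    fst ` set (fst (snd (via_prev X x))) \<subseteq> unit_edges Cur"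
proof -
  have Xm: "insert m X \<in> Prev" using insert_m_Prev[OF X] .
  have XC: "X \<in> Cur" and XmC: "insert m X \<in> Cur" using X Xm Below_subset Prev_subset by blast+
  have "PhiO X (insert m X) x \<in> Obj (Phi (insert m X))" using PhiO_Obj XC XmC Cur_subset x by blast
  hence th: "GValid Cur (\<theta>' (insert m X, PhiO X (insert m X) x))"
    "path_src (\<theta>' (insert m X, PhiO X (insert m X) x)) = (insert m X, PhiO X (insert m X) x)"
    "fst ` set (fst (snd (\<theta>' (insert m X, PhiO X (insert m X) x)))) \<subseteq> unit_edges Cur"
    using prev_contr_valid Xm by (simp_all add: tot_obj_iff)
  have "GValid Cur (via_prev X x)"
    unfolding via_prev_def using th valid_unit_path[OF Cur_subset XC XmC _ x] by (intro LG.valid_path_cat) auto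
  moreover have "unit_edge X (insert m X) x \<in> unit_edges Cur" using unit_edge_in[OF XC XmC _ x] by blast
  ultimately show ?thesis using th unfolding via_prev_def by (cases "\<theta>' (insert m X, PhiO X (insert m X) x)") (simp add: unit_path_def)
qed

lemma via_top_valid:
  assumes X: "X \<in> Below" and x: "x \<in> Obj (Phi X)"
  shows "GValid Cur (via_top X x) \<and> path_src (via_top X x) = (Top, PhiO X Top x) \<and>
    fst ` set (fst (snd (via_top X x))) \<subseteq> unit_edges Cur"
proof -
  have XC: "X \<in> Cur" and XT: "X \<subseteq> Top" using X unfolding Below_iff by blast+
  note h = via_prev_valid[OF X x]
  have "GValid Cur (via_top X x)" unfolding via_top_def
    using h valid_unit_path[OF Cur_subset XC Top_Cur XT x] by (intro LG.valid_path_cat LG.valid_path_rev) auto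
  moreover have "unit_edge X Top x \<in> unit_edges Cur" using unit_edge_in[OF XC Top_Cur XT x] .
  ultimately show ?thesis using h unfolding via_top_def by (cases "via_prev X x") (simp add: unit_path_def)
qed

lemma via_prev_edge_Prev:
  assumes X: "X \<in> Below" and Y: "Y \<in> Prev" and XY: "X \<subseteq> Y" and x: "x \<in> Obj (Phi X)"
  shows "(path_cat (unit_path X Y x) (\<theta>' (Y, PhiO X Y x)), via_prev X x) \<in> GCong Cur"
proof -
  define Xm where "Xm = insert m X"
  have XmP: "Xm \<in> Prev" using insert_m_Prev[OF X] Xm_def by simp
  have C: "X \<in> Cur" "Xm \<in> Cur" "Y \<in> Cur" using X XmP Y Below_subset Prev_subset by blast+
  have B: "X \<in> B" "Xm \<in> B" "Y \<in> B" using C Cur_subset by blast+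
  have sub: "X \<subseteq> Xm" "Xm \<subseteq> Y" using Prev_iff_m[OF C(3)] Y XY Xm_def by auto
  define x' where "x' = PhiO X Xm x"
  define y where "y = PhiO X Y x"
  have x': "x' \<in> Obj (Phi Xm)" and y: "y \<in> Obj (Phi Y)" using PhiO_Obj B sub XY x x'_def y_def by blast+
  have e: "PhiO Xm Y x' = y" using PhiO_comp[OF B sub x] x'_def y_def by simp
  have th: "GValid Cur (\<theta>' (Y,y))" "path_src (\<theta>' (Y,y)) = (Y,y)"
    using prev_contr_valid[of "(Y,y)"] Y y by (auto simp: tot_obj_iff)
  have "(path_cat (unit_path X Y x) (\<theta>' (Y,y)), path_cat (path_cat (unit_path X Xm x) (unit_path Xm Y x')) (\<theta>' (Y,y))) \<in> GCong Cur"
    using LG.cong_cat_right[OF unit_path_comp[OF Cur_subset C(1,2,3) sub x] th(1)] th(2) e x'_def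
    by (simp add: LG.cong_sym)
  also have "(path_cat (path_cat (unit_path X Xm x) (unit_path Xm Y x')) (\<theta>' (Y,y)), path_cat (unit_path X Xm x) (\<theta>' (Xm,x'))) \<in> GCong Cur"
    using LG.cong_cat_left[OF prev_contr_edge[OF XmP Y sub(2) x'] valid_unit_path[OF Cur_subset C(1,2) sub(1) x]] e x'_def
    by (simp add: path_cat_assoc)
  finally show ?thesis unfolding via_prev_def Xm_def[symmetric] x'_def[symmetric] y_def .
qed

lemma via_prev_edge:
  assumes X: "X \<in> Below" and Y: "Y \<in> Below" and XY: "X \<subseteq> Y" and x: "x \<in> Obj (Phi X)"
  shows "(path_cat (unit_path X Y x) (via_prev Y (PhiO X Y x)), via_prev X x) \<in> GCong Cur"
proof -
  define Ym where "Ym = insert m Y"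
  have YmP: "Ym \<in> Prev" using insert_m_Prev[OF Y] Ym_def by simp
  have C: "X \<in> Cur" "Y \<in> Cur" "Ym \<in> Cur" using X Y YmP Below_subset Prev_subset by blast+
  have B: "X \<in> B" "Y \<in> B" "Ym \<in> B" using C Cur_subset by blast+
  have sub: "Y \<subseteq> Ym" "X \<subseteq> Ym" using XY Ym_def by auto
  define y where "y = PhiO X Y x"
  have y: "y \<in> Obj (Phi Y)" using PhiO_Obj B XY x y_def by blast
  have e: "PhiO Y Ym y = PhiO X Ym x" using PhiO_comp[OF B(1,2,3) XY sub(1) x] y_def by simp
  have th: "GValid Cur (\<theta>' (Ym, PhiO X Ym x))" "path_src (\<theta>' (Ym, PhiO X Ym x)) = (Ym, PhiO X Ym x)"
    using prev_contr_valid[of "(Ym, PhiO X Ym x)"] YmP PhiO_Obj[OF B(1,3) sub(2) x] by (auto simp: tot_obj_iff)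
  have "path_cat (unit_path X Y x) (via_prev Y y)
      = path_cat (path_cat (unit_path X Y x) (unit_path Y Ym y)) (\<theta>' (Ym, PhiO X Ym x))"
    unfolding via_prev_def Ym_def[symmetric] e path_cat_assoc ..
  also have "(\<dots>, path_cat (unit_path X Ym x) (\<theta>' (Ym, PhiO X Ym x))) \<in> GCong Cur"
    using LG.cong_cat_right[OF unit_path_comp[OF Cur_subset C XY sub(1) x] th(1)] th(2) e
    unfolding y_def by simp
  also have "(path_cat (unit_path X Ym x) (\<theta>' (Ym, PhiO X Ym x)), via_prev X x) \<in> GCong Cur"
    using via_prev_edge_Prev[OF X YmP sub(2) x] .
  finally show ?thesis unfolding y_def .
qed

lemma via_top_step:
  assumes X: "X \<in> Below" and Y: "Y \<in> Below" and XY: "X \<subseteq> Y" and x: "x \<in> Obj (Phi X)"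
  shows "(via_top X x, via_top Y (PhiO X Y x)) \<in> GCong Cur"
proof -
  have C: "X \<in> Cur" "Y \<in> Cur" and YT: "Y \<subseteq> Top" using X Y unfolding Below_iff by blast+
  have B: "X \<in> B" "Y \<in> B" using C Cur_subset by blast+
  define y where "y = PhiO X Y x"
  have y: "y \<in> Obj (Phi Y)" using PhiO_Obj B XY x y_def by blast
  have hY: "GValid Cur (via_prev Y y)" "path_src (via_prev Y y) = (Y,y)" using via_prev_valid[OF Y y] by auto
  have uXY: "GValid Cur (unit_path X Y x)" using valid_unit_path[OF Cur_subset C XY x] .
  have uYT: "GValid Cur (unit_path Y Top y)" using valid_unit_path[OF Cur_subset C(2) Top_Cur YT y] .
  have "(path_rev (unit_path X Top x), path_cat (path_rev (unit_path Y Top y)) (path_rev (unit_path X Y x))) \<in> GCong Cur"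
    using LG.cong_rev[OF LG.cong_sym[OF unit_path_comp[OF Cur_subset C Top_Cur XY YT x]]] y_def by simp
  hence "(via_top X x, path_cat (path_cat (path_rev (unit_path Y Top y)) (path_rev (unit_path X Y x)))
                          (path_cat (unit_path X Y x) (via_prev Y y))) \<in> GCong Cur"
    unfolding via_top_def using LG.cong_sym[OF via_prev_edge[OF X Y XY x]] via_prev_valid[OF X x] y_def
    by (intro LG.cong_cat) simp_all
  also have "(path_cat (path_cat (path_rev (unit_path Y Top y)) (path_rev (unit_path X Y x)))
                       (path_cat (unit_path X Y x) (via_prev Y y)), via_top Y y) \<in> GCong Cur"
    using LG.cong_cancel_mid_rev[OF LG.valid_path_rev[OF uYT] uXY hY(1)] hY(2) y_def
    unfolding via_top_def by (simp add: path_cat_assoc)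
  finally show ?thesis unfolding y_def .
qed

lemma via_top_obj_eq:
  assumes "(p,q) \<in> obj_eq Below Phi PhiO"
  shows "(via_top (fst p) (snd p), via_top (fst q) (snd q)) \<in> GCong Cur"
proof -
  have p: "p \<in> GObj Below" and "(p,q) \<in> (obj_step Below Phi PhiO \<union> (obj_step Below Phi PhiO)\<inverse>)\<^sup>*"
    using assms unfolding obj_eq_def by blast+
  from this(2) show ?thesis
  proof (induction rule: rtrancl_induct)
    case base thus ?case using p via_top_valid LG.cong_refl by (cases p) (auto simp: tot_obj_iff)
  next
    case (step q r)
    have "(via_top (fst q) (snd q), via_top (fst r) (snd r)) \<in> GCong Cur \<or>
          (via_top (fst r) (snd r), via_top (fst q) (snd q)) \<in> GCong Cur"
      using step.hyps(2) via_top_step unfolding obj_step_def by auto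
    thus ?case using step.IH LG.cong_trans LG.cong_sym by blast
  qed
qed

definition next_contr where
  "next_contr p = (if fst p \<in> Prev then \<theta>' p
     else if fst p \<noteq> Top then via_prev (fst p) (snd p)
     else if \<exists>q\<in>GObj Below. PhiO (fst q) Top (snd q) = snd p
       then (let q = SOME q. q \<in> GObj Below \<and> PhiO (fst q) Top (snd q) = snd p in via_top (fst q) (snd q))
     else (p, [], p))"

lemma next_contr_Prev: "X \<in> Prev \<Longrightarrow> next_contr (X,x) = \<theta>' (X,x)"
  by (simp add: next_contr_def)

lemma next_contr_via_prev: "X \<in> Below \<Longrightarrow> next_contr (X,x) = via_prev X x"
  using Prev_iff_m Below_iff by (auto simp: next_contr_def)

lemma next_contr_TopE:
  assumes "\<exists>q\<in>GObj Below. PhiO (fst q) Top (snd q) = x"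
  obtains a z where "(a,z) \<in> GObj Below" "PhiO a Top z = x" "next_contr (Top,x) = via_top a z"
proof -
  let ?q = "SOME q. q \<in> GObj Below \<and> PhiO (fst q) Top (snd q) = x"
  have "?q \<in> GObj Below \<and> PhiO (fst ?q) Top (snd ?q) = x" using someI_ex[OF assms[unfolded Bex_def]] .
  moreover have "next_contr (Top,x) = via_top (fst ?q) (snd ?q)" using assms Top_notin_Prev by (simp add: next_contr_def Let_def)
  ultimately show thesis using that[of "fst ?q" "snd ?q"] by simp
qed

lemma next_contr_Top_trivial:
  "\<not> (\<exists>q\<in>GObj Below. PhiO (fst q) Top (snd q) = x) \<Longrightarrow> next_contr (Top,x) = ((Top,x),[],(Top,x))"
  using Top_notin_Prev by (simp add: next_contr_def)

lemma next_contr_valid: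
  assumes p: "p \<in> GObj Cur"
  shows "GValid Cur (next_contr p) \<and> path_src (next_contr p) = p \<and> fst ` set (fst (snd (next_contr p))) \<subseteq> unit_edges Cur"
proof -
  obtain X x where px: "p = (X,x)" and X: "X \<in> Cur" "x \<in> Obj (Phi X)" using p by (cases p) (auto simp: tot_obj_iff)
  consider "X \<in> Prev" | "X \<in> Below" | "X = Top" using Cur_not_Prev Below_iff X by blast
  thus ?thesis
  proof cases
    case 1 thus ?thesis using prev_contr_valid px X next_contr_Prev by (simp add: tot_obj_iff)
  next
    case 2 thus ?thesis using via_prev_valid px X next_contr_via_prev by simp
  next
    case 3
    show ?thesis
    proof (cases "\<exists>q\<in>GObj Below. PhiO (fst q) Top (snd q) = x")
      case True
      then obtain a z where "(a,z) \<in> GObj Below" "PhiO a Top z = x" "next_contr (Top,x) = via_top a z" by (rule next_contr_TopE)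
      thus ?thesis using via_top_valid[of a z] px 3 by (simp add: tot_obj_iff)
    next
      case False
      thus ?thesis using next_contr_Top_trivial p px 3 by (simp add: LG.valid_iff)
    qed
  qed
qed

text \<open>This is the only place where condition \<open>A\<close> enters.\<close>

lemma via_prev_edge_Top:
  assumes X: "X \<in> Below" and x: "x \<in> Obj (Phi X)"
  shows "(path_cat (unit_path X Top x) (next_contr (Top, PhiO X Top x)), via_prev X x) \<in> GCong Cur"
proof -
  have XC: "X \<in> Cur" and XT: "X \<subseteq> Top" using X unfolding Below_iff by blast+
  have XxA: "(X,x) \<in> GObj Below" using X x by (simp add: tot_obj_iff)
  hence "\<exists>q\<in>GObj Below. PhiO (fst q) Top (snd q) = PhiO X Top x" by force
  then obtain a z where az: "(a,z) \<in> GObj Below" "PhiO a Top z = PhiO X Top x" "next_contr (Top, PhiO X Top x) = via_top a z"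
    by (rule next_contr_TopE)
  have "((X,x),(a,z)) \<in> obj_eq Below Phi PhiO" using inj XxA az(1,2) unfolding obj_inj_def by simp
  hence "(via_top a z, via_top X x) \<in> GCong Cur" using via_top_obj_eq LG.cong_sym by fastforce
  hence "(path_cat (unit_path X Top x) (via_top a z), path_cat (unit_path X Top x) (via_top X x)) \<in> GCong Cur"
    using valid_unit_path[OF Cur_subset XC Top_Cur XT x] via_top_valid[OF X x] LG.cong_valid
    by (intro LG.cong_cat_left) auto
  also have "(path_cat (unit_path X Top x) (via_top X x), via_prev X x) \<in> GCong Cur"
    unfolding via_top_def using valid_unit_path[OF Cur_subset XC Top_Cur XT x] via_prev_valid[OF X x]
    by (intro LG.cong_cancel_left) auto
  finally show ?thesis using az(3) by simp
qed

lemma next_contr_edge: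
  assumes X: "X \<in> Cur" and Y: "Y \<in> Cur" and XY: "X \<subseteq> Y" and x: "x \<in> Obj (Phi X)"
  shows "(path_cat (unit_path X Y x) (next_contr (Y, PhiO X Y x)), next_contr (X,x)) \<in> GCong Cur"
proof -
  have y: "PhiO X Y x \<in> Obj (Phi Y)" using PhiO_Obj X Y XY x Cur_subset by blast
  consider "X \<in> Prev" | "X = Top" | "X \<in> Below" using Cur_not_Prev Below_iff X by blast
  thus ?thesis
  proof cases
    case 1
    hence "Y \<in> Prev" using Prev_upward Y XY by blast
    thus ?thesis using prev_contr_edge[OF 1 _ XY x] next_contr_Prev 1 by simp
  next
    case 2
    hence XYT: "X = Top" "Y = Top" using Top_maximal XY Y by blast+
    have "PhiO X X x = x" using PhiO_id X x Cur_subset by blast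
    moreover have "GValid Cur (next_contr (X,x))" "path_src (next_contr (X,x)) = (X,x)" using next_contr_valid X x by (auto simp: tot_obj_iff)
    ultimately show ?thesis
      using LG.cong_cat_right[OF unit_path_id[OF Cur_subset X x]] XYT by simp
  next
    case 3
    consider "Y \<in> Prev" | "Y = Top" | "Y \<in> Below" using Cur_not_Prev Below_iff Y by blast
    thus ?thesis
    proof cases
      case 1 thus ?thesis using via_prev_edge_Prev[OF 3 1 XY x] next_contr_Prev next_contr_via_prev 3 by simp
    next
      case 2 thus ?thesis using via_prev_edge_Top[OF 3 x] next_contr_via_prev 3 by simp
    next
      case Y': 3 thus ?thesis using via_prev_edge[OF 3 Y' XY x] next_contr_via_prev 3 by simp
    qed
  qed
qed

lemma contraction_next_contr: "contraction Cur next_contr"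
  unfolding contraction_def using next_contr_valid next_contr_edge by blast

end

context diagram
begin

lemma ex_contraction_stage:
  "m \<le> n \<Longrightarrow> (\<And>k. 1 \<le> k \<Longrightarrow> k \<le> m \<Longrightarrow> obj_inj ({1..n} - {k}) {k+1..n}) \<Longrightarrow> \<exists>\<theta>. contraction (stage m) \<theta>"
proof (induction m)
  case 0
  have "stage 0 = {}" by (auto simp: stage_def Bsets_rel_def)
  hence "contraction (stage 0) (\<lambda>p. p0)" for p0 by (simp add: contraction_def tot_obj_def)
  thus ?case by blast
next
  case (Suc m)
  then obtain \<theta> where \<theta>: "contraction (stage m) \<theta>" by auto
  interpret contraction_step n Phi PhiO PhiM "Suc m" \<theta>
    by unfold_locales (use Suc.prems \<theta> in simp_all)
  show ?case using contraction_next_contr by blast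
qed

lemma obj_inj_trivial: "obj_inj ({1..n} - {1}) {1+1..n}"
proof -
  have "{1..n} - {1::nat} = {1+1..n}" by auto
  hence "Bsets_rel ({1..n} - {1}) {1+1..n} = {}" unfolding Bsets_rel_def by blast
  thus ?thesis by (simp add: obj_inj_def tot_obj_def)
qed

lemma obj_inj_stages:
  assumes n: "n \<ge> 2"
    and A1: "\<forall>k. 1 \<le> k \<and> k \<le> n - 1 \<longrightarrow> cond_A Phi PhiO PhiM {1..k} {}"
    and A2: "\<forall>k U. 1 \<le> k \<and> k \<le> n - 2 \<and> U \<subseteq> {k+2..n} \<longrightarrow> cond_A Phi PhiO PhiM ({1..k} \<union> U) U"
    and k: "1 \<le> k" "k \<le> n"
  shows "obj_inj ({1..n} - {k}) {k+1..n}"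
proof -
  have "k \<in> {1..n}" using k by simp
  hence V: "{1..n} - {k} \<in> B" unfolding Bsets_def by blast
  consider "k = 1" | "k = n" | "1 < k" "k < n" using k by linarith
  thus ?thesis
  proof cases
    case 1 thus ?thesis using obj_inj_trivial by (simp only:)
  next
    case 2
    have e: "{1..n} - {k} = {1..n-1}" "{k+1..n} = {}" using n 2 by auto
    have "cond_A Phi PhiO PhiM {1..n-1} {}" using A1 n by simp
    thus ?thesis using obj_inj_cond_A[OF V] unfolding e by blast
  next
    case 3
    have e: "{1..n} - {k} = {1..k-1} \<union> {k+1..n}" using 3 by auto
    have "cond_A Phi PhiO PhiM ({1..k-1} \<union> {k+1..n}) {k+1..n}" using 3 by (intro A2[rule_format]) auto
    thus ?thesis using obj_inj_cond_A[OF V] unfolding e by blast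
  qed
qed

end

section \<open>The comparison functor as a map of presentations\<close>

text \<open>Otherwise \<open>simp\<close> rewrites the index set \<open>Bsets {1..n}\<close> to \<open>Bsets {Suc 0..n}\<close> and the
  locale abbreviations below stop matching.\<close>

declare One_nat_def [simp del]

context diagram
begin

abbreviation "CV \<equiv> colim_V B Phi PhiO"
abbreviation "CE \<equiv> colim_E B Phi"
abbreviation "cs \<equiv> colim_s Phi PhiO B"
abbreviation "ct \<equiv> colim_t Phi PhiO B"
abbreviation "CR \<equiv> colim_R B Phi PhiO PhiM"
abbreviation "CCong \<equiv> pcong CV CE cs ct CR"
abbreviation "CValid \<equiv> valid_path CV CE cs ct"
abbreviation "cl p \<equiv> obj_eq B Phi PhiO `` {p}"

lemma colim_s_simp[simp]: "colim_s Phi PhiO I (X,f) = obj_eq I Phi PhiO `` {(X, dom (Phi X) f)}"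
  by (simp add: colim_s_def)

lemma colim_t_simp[simp]: "colim_t Phi PhiO I (X,f) = obj_eq I Phi PhiO `` {(X, cod (Phi X) f)}"
  by (simp add: colim_t_def)

lemma colim_E_iff: "(X,f) \<in> colim_E I Phi \<longleftrightarrow> X \<in> I \<and> f \<in> Arr (Phi X)"
  by (simp add: colim_E_def)

lemma cl_eq: "(p,q) \<in> obj_eq B Phi PhiO \<Longrightarrow> cl p = cl q"
  using obj_eq_equiv by (rule equiv_class_eq) simp

lemma cl_in: "p \<in> GObj B \<Longrightarrow> cl p \<in> CV"
  unfolding colim_V_def by (rule quotientI)

lemma cl_step: "X \<in> B \<Longrightarrow> Y \<in> B \<Longrightarrow> X \<subseteq> Y \<Longrightarrow> x \<in> Obj (Phi X) \<Longrightarrow> cl (X,x) = cl (Y, PhiO X Y x)"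
  by (rule cl_eq, rule obj_eq_stepI) auto

lemma presentation_colim: "presentation CV CE cs ct"
proof
  fix e assume "e \<in> CE"
  then obtain X f where "e = (X,f)" "X \<in> B" "f \<in> Arr (Phi X)" by (cases e) (auto simp: colim_E_iff)
  thus "cs e \<in> CV \<and> ct e \<in> CV" using dom_cod_Obj cl_in by (simp add: tot_obj_iff)
qed

sublocale C: presentation CV CE cs ct CR
  by (rule presentation_colim)

sublocale T: presentation "GObj B" "GEdge B" tcolim_s "tcolim_t Phi" "GRel B"
  by (rule presentation_G) simp

lemma colim_R_cmp_cong:
  assumes "X \<in> B" "f \<in> Arr (Phi X)" "g \<in> Arr (Phi X)" "cod (Phi X) f = dom (Phi X) g"
  shows "(path_cat (edge_path cs ct (X,f)) (edge_path cs ct (X,g)), edge_path cs ct (X, cmp (Phi X) g f)) \<in> CCong"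
proof -
  have c: "cmp (Phi X) g f \<in> Arr (Phi X)" "dom (Phi X) (cmp (Phi X) g f) = dom (Phi X) f"
    "cod (Phi X) (cmp (Phi X) g f) = cod (Phi X) g" using cmp_Arr[OF assms] by auto
  have "(path_cat (edge_path cs ct (X,f)) (edge_path cs ct (X,g)), edge_path cs ct (X, cmp (Phi X) g f)) \<in> CR"
    unfolding colim_R_def Let_def using assms c by (intro UnI1 CollectI exI conjI) auto
  moreover have "CValid (path_cat (edge_path cs ct (X,f)) (edge_path cs ct (X,g)))"
    using assms by (intro C.valid_path_cat C.valid_edge_path) (auto simp: colim_E_iff)
  moreover have "CValid (edge_path cs ct (X, cmp (Phi X) g f))"
    using assms c by (intro C.valid_edge_path) (auto simp: colim_E_iff)
  ultimately show ?thesis using c assms(4) by (intro pcong.prel) auto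
qed

lemma colim_R_ide_cong:
  assumes "X \<in> B" "x \<in> Obj (Phi X)"
  shows "(edge_path cs ct (X, ide (Phi X) x), (cl (X,x), [], cl (X,x))) \<in> CCong"
proof -
  have i: "ide (Phi X) x \<in> Arr (Phi X)" "dom (Phi X) (ide (Phi X) x) = x" "cod (Phi X) (ide (Phi X) x) = x"
    using ide_Arr[OF assms] by auto
  have "(edge_path cs ct (X, ide (Phi X) x), (cl (X,x), [], cl (X,x))) \<in> CR"
    unfolding colim_R_def Let_def using assms i by (intro UnI1 UnI2 CollectI exI conjI) auto
  moreover have "CValid (edge_path cs ct (X, ide (Phi X) x))"
    using assms i by (intro C.valid_edge_path) (auto simp: colim_E_iff)
  moreover have "cl (X,x) \<in> CV" using cl_in assms by (simp add: tot_obj_iff)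
  ultimately show ?thesis using i by (intro pcong.prel) (auto simp: C.valid_iff)
qed

lemma colim_R_map_cong:
  assumes "X \<in> B" "Y \<in> B" "X \<subseteq> Y" "f \<in> Arr (Phi X)"
  shows "(edge_path cs ct (X,f), edge_path cs ct (Y, PhiM X Y f)) \<in> CCong"
proof -
  have a: "PhiM X Y f \<in> Arr (Phi Y)" "dom (Phi Y) (PhiM X Y f) = PhiO X Y (dom (Phi X) f)"
    "cod (Phi Y) (PhiM X Y f) = PhiO X Y (cod (Phi X) f)" using PhiM_Arr[OF assms] by auto
  have d: "dom (Phi X) f \<in> Obj (Phi X)" "cod (Phi X) f \<in> Obj (Phi X)" using dom_cod_Obj[OF assms(1,4)] by auto
  have e: "edge_path cs ct (Y, PhiM X Y f) = (cl (X, dom (Phi X) f), [((Y, PhiM X Y f), True)], cl (X, cod (Phi X) f))"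
    using a cl_step[OF assms(1-3) d(1)] cl_step[OF assms(1-3) d(2)] by simp
  have "(edge_path cs ct (X,f), edge_path cs ct (Y, PhiM X Y f)) \<in> CR"
    unfolding e colim_R_def Let_def using assms by (intro UnI2 CollectI exI conjI) auto
  moreover have "CValid (edge_path cs ct (X,f))" "CValid (edge_path cs ct (Y, PhiM X Y f))"
    by (rule C.valid_edge_path, use assms a in \<open>simp add: colim_E_iff\<close>)+
  ultimately show ?thesis using e by (intro pcong.prel) auto
qed

lemma colim_R_cases:
  assumes "(p,q) \<in> CR"
  obtains (cmp) X f g where "p = path_cat (edge_path cs ct (X,f)) (edge_path cs ct (X,g))"
      "q = edge_path cs ct (X, cmp (Phi X) g f)"
      "X \<in> B" "f \<in> Arr (Phi X)" "g \<in> Arr (Phi X)" "cod (Phi X) f = dom (Phi X) g"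
  | (ide) X x where "p = edge_path cs ct (X, ide (Phi X) x)" "q = (cl (X,x), [], cl (X,x))"
      "X \<in> B" "x \<in> Obj (Phi X)"
  | (map) X Y f where "p = edge_path cs ct (X,f)" "q = edge_path cs ct (Y, PhiM X Y f)"
      "X \<in> B" "Y \<in> B" "X \<subseteq> Y" "f \<in> Arr (Phi X)"
proof -
  consider (cmp) X f g where "p = (cl (X, dom (Phi X) f), [((X, f), True), ((X, g), True)], cl (X, cod (Phi X) g))"
      "q = (cl (X, dom (Phi X) f), [((X, cmp (Phi X) g f), True)], cl (X, cod (Phi X) g))"
      "X \<in> B" "f \<in> Arr (Phi X)" "g \<in> Arr (Phi X)" "cod (Phi X) f = dom (Phi X) g"
  | (ide) X x where "p = (cl (X,x), [((X, ide (Phi X) x), True)], cl (X,x))" "q = (cl (X,x), [], cl (X,x))"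
      "X \<in> B" "x \<in> Obj (Phi X)"
  | (map) X Y f where "p = (cl (X, dom (Phi X) f), [((X, f), True)], cl (X, cod (Phi X) f))"
      "q = (cl (X, dom (Phi X) f), [((Y, PhiM X Y f), True)], cl (X, cod (Phi X) f))"
      "X \<in> B" "Y \<in> B" "X \<subseteq> Y" "f \<in> Arr (Phi X)"
    using assms unfolding colim_R_def Let_def by blast
  thus thesis
  proof cases
    case (cmp X f g) thus thesis using that(1)[where X=X and f=f and g=g] cmp_Arr[OF cmp(3-6)] by simp
  next
    case (ide X x) thus thesis using that(2)[where X=X and x=x] ide_Arr[OF ide(3,4)] by simp
  next
    case (map X Y f)
    have "dom (Phi X) f \<in> Obj (Phi X)" "cod (Phi X) f \<in> Obj (Phi X)" using dom_cod_Obj map by auto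
    thus thesis using that(3)[where X=X and Y=Y and f=f] map PhiM_Arr[OF map(3-6)] cl_step[OF map(3-5)] by simp
  qed
qed

abbreviation "delta_v \<equiv> delta_obj B Phi PhiO"

definition delta_e where
  "delta_e e = (delta_v (tcolim_s e), [(delta_edge e, True)], delta_v (tcolim_t Phi e))"

lemma delta_v_eq[simp]: "delta_v p = cl p"
  by (simp add: delta_obj_def)

lemma delta_edge_simp[simp]: "delta_edge (X,x,Y,g) = (Y,g)"
  by (simp add: delta_edge_def)

lemma delta_e_eq:
  assumes "(X,x,Y,g) \<in> GEdge B" shows "delta_e (X,x,Y,g) = edge_path cs ct (Y,g)"
proof -
  have "X \<in> B" "Y \<in> B" "X \<subseteq> Y" "x \<in> Obj (Phi X)" "dom (Phi Y) g = PhiO X Y x"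
    using assms by (simp_all add: GEdge_iff)
  hence "cl (X,x) = cl (Y, dom (Phi Y) g)" using cl_step[of X Y x] by simp
  thus ?thesis by (simp add: delta_e_def)
qed

lemma delta_comp_cong:
  assumes e1: "(X,x,Y,g) \<in> GEdge B" and e2: "(Y, cod (Phi Y) g, Z, h) \<in> GEdge B"
  shows "((cl (X,x), [((Y,g), True), ((Z,h), True)], cl (Z, cod (Phi Z) h)),
          (cl (X,x), [((Z, cmp (Phi Z) h (PhiM Y Z g)), True)], cl (Z, cod (Phi Z) h))) \<in> CCong"
proof -
  have h: "X \<in> B" "Y \<in> B" "X \<subseteq> Y" "x \<in> Obj (Phi X)" "g \<in> Arr (Phi Y)" "dom (Phi Y) g = PhiO X Y x"
    "Z \<in> B" "Y \<subseteq> Z" "h \<in> Arr (Phi Z)" "dom (Phi Z) h = PhiO Y Z (cod (Phi Y) g)"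
    using e1 e2 by (simp_all add: GEdge_iff)
  have Pg: "PhiM Y Z g \<in> Arr (Phi Z)" "dom (Phi Z) (PhiM Y Z g) = PhiO Y Z (dom (Phi Y) g)"
    "cod (Phi Z) (PhiM Y Z g) = dom (Phi Z) h" using PhiM_Arr[OF h(2,7,8,5)] h(10) by auto
  have dg: "dom (Phi Y) g \<in> Obj (Phi Y)" "cod (Phi Y) g \<in> Obj (Phi Y)" using dom_cod_Obj[OF h(2,5)] by auto
  have E1: "cl (Y, dom (Phi Y) g) = cl (X,x)" using cl_step[OF h(1-4)] h(6) by simp
  have E2: "cl (Z, dom (Phi Z) (PhiM Y Z g)) = cl (X,x)" using cl_step[OF h(2,7,8) dg(1)] E1 Pg(2) by simp
  have E3: "cl (Y, cod (Phi Y) g) = cl (Z, dom (Phi Z) h)" using cl_step[OF h(2,7,8) dg(2)] h(10) by simp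
  have vh: "CValid (edge_path cs ct (Z,h))" by (rule C.valid_edge_path) (use h in \<open>simp add: colim_E_iff\<close>)
  have "((cl (X,x), [((Y,g), True), ((Z,h), True)], cl (Z, cod (Phi Z) h)),
          (cl (X,x), [((Z, PhiM Y Z g), True), ((Z,h), True)], cl (Z, cod (Phi Z) h))) \<in> CCong"
    using C.cong_cat_right[OF colim_R_map_cong[OF h(2,7,8,5)] vh] E1 E2 E3 Pg by simp
  also have "((cl (X,x), [((Z, PhiM Y Z g), True), ((Z,h), True)], cl (Z, cod (Phi Z) h)),
          (cl (X,x), [((Z, cmp (Phi Z) h (PhiM Y Z g)), True)], cl (Z, cod (Phi Z) h))) \<in> CCong"
    using colim_R_cmp_cong[OF h(7) Pg(1) h(9) Pg(3)] cmp_Arr[OF h(7) Pg(1) h(9) Pg(3)] E2 by simp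
  finally show ?thesis .
qed

lemma presentation_map_delta:
  "presentation_map (GObj B) (GEdge B) tcolim_s (tcolim_t Phi) (GRel B) CV CE cs ct CR delta_v delta_e"
proof unfold_locales
  fix v assume "v \<in> GObj B" thus "delta_v v \<in> CV" by (simp add: cl_in)
next
  fix e assume e: "e \<in> GEdge B"
  then obtain X x Y g where ex: "e = (X,x,Y,g)" "Y \<in> B" "g \<in> Arr (Phi Y)" by (cases e) (auto simp: GEdge_iff)
  thus "C.valid (delta_e e) \<and> path_src (delta_e e) = delta_v (tcolim_s e) \<and> path_tgt (delta_e e) = delta_v (tcolim_t Phi e)"
    using delta_e_eq e C.valid_edge_path[of "(Y,g)"] by (auto simp: delta_e_def colim_E_iff)
next
  fix p q assume "(p,q) \<in> GRel B"
  thus "(path_subst delta_v delta_e p, path_subst delta_v delta_e q) \<in> C.cong"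
  proof (cases rule: GRelE)
    case (comp X x Y g Z h)
    thus ?thesis using delta_comp_cong[OF comp(3,4)] by (simp add: delta_e_def)
  next
    case (ide X x)
    thus ?thesis using colim_R_ide_cong[OF ide(3,4)] ide_Arr[OF ide(3,4)] by (simp add: delta_e_def)
  qed
qed

end

section \<open>A contraction of \<open>B\<close> inverts the comparison functor\<close>

text \<open>Conjugating by \<open>\<theta>\<close> (\<open>straighten\<close>) kills every unit edge, so the inverse functor can
  send the generator \<open>(Y,f)\<close> of the colimit to the straightened edge \<open>(Y, dom f) \<rightarrow> (Y, cod f)\<close>.\<close>

locale contracted = diagram n Phi PhiO PhiM
  for n and Phi :: "nat set \<Rightarrow> ('o,'m) gpd" and PhiO PhiM +
  fixes \<theta> :: "nat set \<times> 'o \<Rightarrow> (nat set \<times> 'o, nat set \<times> 'o \<times> nat set \<times> 'm) path"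
  assumes contr: "contraction B \<theta>"
begin

sublocale D: presentation_map "GObj B" "GEdge B" tcolim_s "tcolim_t Phi" "GRel B" CV CE cs ct CR delta_v delta_e
  by (rule presentation_map_delta)

lemma contr_valid:
  assumes "p \<in> GObj B"
  shows "T.valid (\<theta> p)" "path_src (\<theta> p) = p" "fst ` set (fst (snd (\<theta> p))) \<subseteq> unit_edges B"
  using contractionD(1)[OF contr assms] by auto

lemma contr_edge:
  "X \<in> B \<Longrightarrow> Y \<in> B \<Longrightarrow> X \<subseteq> Y \<Longrightarrow> x \<in> Obj (Phi X) \<Longrightarrow>
   (path_cat (unit_path X Y x) (\<theta> (Y, PhiO X Y x)), \<theta> (X,x)) \<in> T.cong"
  by (rule contractionD(2)[OF contr])

definition rep where "rep p = path_tgt (\<theta> p)"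

lemma rep_GObj: "p \<in> GObj B \<Longrightarrow> rep p \<in> GObj B"
  using contr_valid T.valid_ends unfolding rep_def by blast

lemma rep_obj_eq: "(p,q) \<in> obj_eq B Phi PhiO \<Longrightarrow> rep p = rep q"
proof -
  have "rep a = rep b" if ab: "(a,b) \<in> obj_step B Phi PhiO" for a b
  proof -
    obtain X Y x where "a = (X,x)" "b = (Y, PhiO X Y x)" "X \<in> B" "Y \<in> B" "X \<subseteq> Y" "x \<in> Obj (Phi X)"
      using ab unfolding obj_step_def by blast
    thus ?thesis using T.cong_valid[OF contr_edge] unfolding rep_def by simp
  qed
  thus "(p,q) \<in> obj_eq B Phi PhiO \<Longrightarrow> rep p = rep q" using obj_eq_invariant[of B rep p q] by blast
qed

lemma delta_unit_letter:
  assumes "T.valid (a,[(e,d)],c)" "e \<in> unit_edges B"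
  shows "cl a = cl c \<and> (path_subst delta_v delta_e (a,[(e,d)],c), (cl a, [], cl a)) \<in> C.cong"
proof -
  obtain X Y x where e: "e = unit_edge X Y x" "X \<in> B" "Y \<in> B" "X \<subseteq> Y" "x \<in> Obj (Phi X)"
    using assms(2) unfolding unit_edges_def by blast
  define y where "y = PhiO X Y x"
  have y: "y \<in> Obj (Phi Y)" using PhiO_Obj e y_def by blast
  have ends: "tcolim_s e = (X,x)" "tcolim_t Phi e = (Y,y)"
    using gpath_unit_edge[OF e(2-5)] e(1) y_def by (auto simp: unit_path_def)
  have cxy: "cl (X,x) = cl (Y,y)" using cl_step[OF e(2-5)] y_def by simp
  have letter: "path_subst delta_v delta_e (a,[(e,d)],c) = (cl a, [((Y, ide (Phi Y) y), d)], cl c)"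
    using e(1) y_def by (cases d) (simp_all add: delta_e_def unit_edge_def word_inv_def)
  have ac: "{a,c} = {(X,x),(Y,y)}" using assms(1) ends by (cases d) (auto simp: T.valid_iff)
  hence "cl a = cl c" using cxy by (auto simp: doubleton_eq_iff)
  moreover have "((cl (Y,y), [((Y, ide (Phi Y) y), d)], cl (Y,y)), (cl (Y,y), [], cl (Y,y))) \<in> C.cong"
    using colim_R_ide_cong[OF e(3) y] C.cong_rev[OF colim_R_ide_cong[OF e(3) y]] ide_Arr[OF e(3) y]
    by (cases d) simp_all
  ultimately show ?thesis using letter ac cxy by (auto simp: doubleton_eq_iff)
qed

lemma delta_unit_path:
  "T.valid (a,w,b) \<Longrightarrow> fst ` set w \<subseteq> unit_edges B \<Longrightarrow> (path_subst delta_v delta_e (a,w,b), (cl a, [], cl a)) \<in> C.cong"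
proof (induction w arbitrary: a)
  case Nil
  hence "a = b" "a \<in> GObj B" by (auto simp: T.valid_iff)
  thus ?case using cl_in[of a] by (simp add: C.valid_iff C.cong_refl)
next
  case (Cons z w)
  obtain e d where z: "z = (e,d)" by (cases z)
  from Cons.prems(1) obtain c where x: "T.valid (a,[z],c)" and w: "T.valid (c,w,b)" by (rule T.valid_Cons_split)
  have l: "cl a = cl c" "(path_subst delta_v delta_e (a,[z],c), (cl a, [], cl a)) \<in> C.cong"
    using delta_unit_letter[of a e d c] x Cons.prems(2) z by auto
  have "(path_cat (path_subst delta_v delta_e (a,[z],c)) (path_subst delta_v delta_e (c,w,b)),
         path_cat (cl a, [], cl a) (cl c, [], cl c)) \<in> C.cong"
    using Cons.IH[OF w] Cons.prems(2) l by (intro C.cong_cat) auto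
  thus ?case using l(1) by simp
qed

lemma delta_contr:
  assumes "p \<in> GObj B" shows "(path_subst delta_v delta_e (\<theta> p), (cl p, [], cl p)) \<in> C.cong"
proof -
  obtain a w b where t: "\<theta> p = (a,w,b)" by (cases "\<theta> p")
  have "a = p" using contr_valid(2)[OF assms] t by simp
  thus ?thesis using delta_unit_path[of a w b] contr_valid[OF assms] t by simp
qed

lemma cl_rep: "p \<in> GObj B \<Longrightarrow> cl (rep p) = cl p"
  using C.cong_valid[OF delta_contr, of p] unfolding rep_def by simp

definition straighten where
  "straighten w = path_cat (path_rev (\<theta> (path_src w))) (path_cat w (\<theta> (path_tgt w)))"

lemma straighten_valid:
  assumes "T.valid w"
  shows "T.valid (straighten w)" "path_src (straighten w) = rep (path_src w)" "path_tgt (straighten w) = rep (path_tgt w)"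
proof -
  have "path_src w \<in> GObj B" "path_tgt w \<in> GObj B" using T.valid_ends[OF assms] by auto
  thus "T.valid (straighten w)" unfolding straighten_def using contr_valid assms
    by (intro T.valid_path_cat T.valid_path_rev) auto
qed (simp_all add: straighten_def rep_def)

lemma straighten_cong:
  assumes "(w,w') \<in> T.cong" shows "(straighten w, straighten w') \<in> T.cong"
proof -
  note v = T.cong_valid[OF assms]
  have e: "path_src w \<in> GObj B" "path_tgt w \<in> GObj B" using T.valid_ends v by auto
  have "(path_cat w (\<theta> (path_tgt w)), path_cat w' (\<theta> (path_tgt w))) \<in> T.cong"
    using contr_valid[OF e(2)] by (intro T.cong_cat_right[OF assms]) auto
  hence "(path_cat (path_rev (\<theta> (path_src w))) (path_cat w (\<theta> (path_tgt w))),
          path_cat (path_rev (\<theta> (path_src w))) (path_cat w' (\<theta> (path_tgt w)))) \<in> T.cong"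
    using contr_valid[OF e(1)] by (intro T.cong_cat_left T.valid_path_rev) auto
  thus ?thesis unfolding straighten_def using v by simp
qed

lemma straighten_cat:
  assumes "T.valid w1" "T.valid w2" "path_tgt w1 = path_src w2"
  shows "(straighten (path_cat w1 w2), path_cat (straighten w1) (straighten w2)) \<in> T.cong"
proof -
  have e: "path_src w1 \<in> GObj B" "path_tgt w1 \<in> GObj B" "path_tgt w2 \<in> GObj B"
    using T.valid_ends assms by auto
  note g1 = contr_valid[OF e(1)] and g2 = contr_valid[OF e(2)] and g3 = contr_valid[OF e(3)]
  have u: "T.valid (path_cat (path_rev (\<theta> (path_src w1))) w1)" using g1 assms by (intro T.valid_path_cat T.valid_path_rev) auto
  have v: "T.valid (path_cat w2 (\<theta> (path_tgt w2)))" using g3 assms by (intro T.valid_path_cat) auto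
  have "(path_cat (path_cat (path_rev (\<theta> (path_src w1))) w1)
          (path_cat (\<theta> (path_tgt w1)) (path_cat (path_rev (\<theta> (path_tgt w1))) (path_cat w2 (\<theta> (path_tgt w2))))),
         path_cat (path_cat (path_rev (\<theta> (path_src w1))) w1) (path_cat w2 (\<theta> (path_tgt w2)))) \<in> T.cong"
    by (rule T.cong_cancel_mid[OF u g2(1) v]) (use g2 assms in simp_all)
  thus ?thesis unfolding straighten_def using assms(3) by (simp add: path_cat_assoc T.cong_sym)
qed

lemma straighten_unit_path:
  assumes "X \<in> B" "Y \<in> B" "X \<subseteq> Y" "x \<in> Obj (Phi X)"
  shows "(straighten (unit_path X Y x), (rep (X,x), [], rep (X,x))) \<in> T.cong"
proof -
  have xT: "(X,x) \<in> GObj B" using assms by (simp add: tot_obj_iff)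
  have "(straighten (unit_path X Y x), path_cat (path_rev (\<theta> (X,x))) (\<theta> (X,x))) \<in> T.cong"
    unfolding straighten_def using contr_valid[OF xT]
    by (simp, intro T.cong_cat_left[OF contr_edge[OF assms]] T.valid_path_rev) auto
  also have "(path_cat (path_rev (\<theta> (X,x))) (\<theta> (X,x)), (rep (X,x), [], rep (X,x))) \<in> T.cong"
    using T.cong_rev_cat contr_valid[OF xT] unfolding rep_def by simp
  finally show ?thesis .
qed

lemma straighten_unit_left:
  assumes u: "X \<in> B" "Y \<in> B" "X \<subseteq> Y" "x \<in> Obj (Phi X)" and q: "T.valid q" "path_src q = (Y, PhiO X Y x)"
  shows "(straighten (path_cat (unit_path X Y x) q), straighten q) \<in> T.cong"
proof -
  have vu: "T.valid (unit_path X Y x)" using valid_unit_path[of B] u by simp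
  have r: "rep (X,x) = rep (Y, PhiO X Y x)" using rep_obj_eq[OF obj_eq_stepI[OF _ u]] by simp
  have "(straighten (path_cat (unit_path X Y x) q), path_cat (straighten (unit_path X Y x)) (straighten q)) \<in> T.cong"
    using straighten_cat[OF vu q(1)] q(2) by simp
  also have "(path_cat (straighten (unit_path X Y x)) (straighten q), path_cat (rep (X,x), [], rep (X,x)) (straighten q)) \<in> T.cong"
    using straighten_valid[OF q(1)] straighten_valid[OF vu] q(2) r
    by (intro T.cong_cat_right[OF straighten_unit_path[OF u]]) auto
  finally show ?thesis using straighten_valid[OF q(1)] straighten_valid[OF vu] q(2) r by simp
qed

lemma straighten_unit_right:
  assumes u: "X \<in> B" "Y \<in> B" "X \<subseteq> Y" "x \<in> Obj (Phi X)" and p: "T.valid p" "path_tgt p = (X,x)"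
  shows "(straighten (path_cat p (unit_path X Y x)), straighten p) \<in> T.cong"
proof -
  have vu: "T.valid (unit_path X Y x)" using valid_unit_path[of B] u by simp
  have "(straighten (path_cat p (unit_path X Y x)), path_cat (straighten p) (straighten (unit_path X Y x))) \<in> T.cong"
    using straighten_cat[OF p(1) vu] p(2) by simp
  also have "(path_cat (straighten p) (straighten (unit_path X Y x)), path_cat (straighten p) (rep (X,x), [], rep (X,x))) \<in> T.cong"
    using straighten_valid[OF p(1)] straighten_valid[OF vu] p(2)
    by (intro T.cong_cat_left[OF straighten_unit_path[OF u]]) auto
  finally show ?thesis using straighten_valid[OF p(1)] straighten_valid[OF vu] p(2) by (simp add: rep_def)
qed

lemma unstraighten:
  assumes "T.valid p"
  shows "(path_cat (\<theta> (path_src p)) (path_cat (straighten p) (path_rev (\<theta> (path_tgt p)))), p) \<in> T.cong"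
proof -
  have e: "path_src p \<in> GObj B" "path_tgt p \<in> GObj B" using T.valid_ends assms by auto
  note g1 = contr_valid[OF e(1)] and g2 = contr_valid[OF e(2)]
  have "(path_cat (\<theta> (path_src p)) (path_cat (path_rev (\<theta> (path_src p))) (path_cat p (path_cat (\<theta> (path_tgt p)) (path_rev (\<theta> (path_tgt p)))))),
         path_cat p (path_cat (\<theta> (path_tgt p)) (path_rev (\<theta> (path_tgt p))))) \<in> T.cong"
    using g1 g2 assms by (intro T.cong_cancel_left T.valid_path_cat T.valid_path_rev) auto
  also have "(path_cat p (path_cat (\<theta> (path_tgt p)) (path_rev (\<theta> (path_tgt p)))), path_cat p (path_id (path_tgt p))) \<in> T.cong"
    using g2 assms by (intro T.cong_cat_left) (auto dest: T.cong_cat_rev)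
  finally show ?thesis using assms unfolding straighten_def by (simp add: path_cat_assoc)
qed

definition inv_v where "inv_v c = rep (SOME q. q \<in> c)"

definition inv_e where "inv_e e = (case e of (Y,f) \<Rightarrow> straighten (gpath (Y, dom (Phi Y) f, Y, f)))"

lemma inv_v_cl:
  assumes "p \<in> GObj B" shows "inv_v (cl p) = rep p"
proof -
  have "p \<in> cl p" using assms unfolding obj_eq_def by blast
  hence "(p, SOME q. q \<in> cl p) \<in> obj_eq B Phi PhiO" using someI by (metis Image_singleton_iff)
  thus ?thesis unfolding inv_v_def using rep_obj_eq by simp
qed

lemma arr_GEdge:
  assumes "(Y,f) \<in> CE"
  shows "(Y, dom (Phi Y) f, Y, f) \<in> GEdge B" "T.valid (gpath (Y, dom (Phi Y) f, Y, f))"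
proof -
  have h: "Y \<in> B" "f \<in> Arr (Phi Y)" using assms unfolding colim_E_iff by auto
  hence "dom (Phi Y) f \<in> Obj (Phi Y)" using dom_cod_Obj by blast
  thus e: "(Y, dom (Phi Y) f, Y, f) \<in> GEdge B" using h PhiO_id[OF h(1)] by (simp add: GEdge_iff)
  show "T.valid (gpath (Y, dom (Phi Y) f, Y, f))" by (rule T.valid_edge_path[OF e])
qed

lemma inv_e_valid:
  assumes "(Y,f) \<in> CE"
  shows "T.valid (inv_e (Y,f))" "path_src (inv_e (Y,f)) = rep (Y, dom (Phi Y) f)"
    "path_tgt (inv_e (Y,f)) = rep (Y, cod (Phi Y) f)"
  using straighten_valid[OF arr_GEdge(2)[OF assms]] unfolding inv_e_def by simp_all

lemma inv_e_edge_path: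
  assumes "(Y,f) \<in> CE" shows "path_subst inv_v inv_e (edge_path cs ct (Y,f)) = inv_e (Y,f)"
proof -
  have "(Y, dom (Phi Y) f) \<in> GObj B" "(Y, cod (Phi Y) f) \<in> GObj B"
    using assms dom_cod_Obj by (auto simp: colim_E_iff tot_obj_iff)
  thus ?thesis using inv_e_valid[OF assms] inv_v_cl by (cases "inv_e (Y,f)") simp
qed

lemma inv_cmp_cong:
  assumes "X \<in> B" "f \<in> Arr (Phi X)" "g \<in> Arr (Phi X)" "cod (Phi X) f = dom (Phi X) g"
  shows "(path_cat (inv_e (X,f)) (inv_e (X,g)), inv_e (X, cmp (Phi X) g f)) \<in> T.cong"
proof -
  have e: "(X,f) \<in> CE" "(X,g) \<in> CE" using assms by (auto simp: colim_E_iff)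
  have c: "dom (Phi X) (cmp (Phi X) g f) = dom (Phi X) f" using cmp_Arr[OF assms] by auto
  have "(path_cat (inv_e (X,f)) (inv_e (X,g)), straighten (path_cat (gpath (X, dom (Phi X) f, X, f)) (gpath (X, dom (Phi X) g, X, g)))) \<in> T.cong"
    using straighten_cat[OF arr_GEdge(2)[OF e(1)] arr_GEdge(2)[OF e(2)]] assms(4) unfolding inv_e_def
    by (simp add: T.cong_sym)
  also have "(straighten (path_cat (gpath (X, dom (Phi X) f, X, f)) (gpath (X, dom (Phi X) g, X, g))), inv_e (X, cmp (Phi X) g f)) \<in> T.cong"
  proof -
    have g: "(X, cod (Phi X) f, X, g) \<in> GEdge B" using arr_GEdge(1)[OF e(2)] assms(4) by simp
    show ?thesis
      using straighten_cong[OF G_comp_cong[OF subset_refl arr_GEdge(1)[OF e(1)] g]] PhiM_id[OF assms(1,2)] assms(4) c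
      unfolding inv_e_def by simp
  qed
  finally show ?thesis .
qed

lemma inv_ide_cong:
  assumes "X \<in> B" "x \<in> Obj (Phi X)"
  shows "(inv_e (X, ide (Phi X) x), (rep (X,x), [], rep (X,x))) \<in> T.cong"
proof -
  have "gpath (X, dom (Phi X) (ide (Phi X) x), X, ide (Phi X) x) = unit_path X X x"
    using ide_Arr[OF assms] PhiO_id[OF assms] gpath_unit_edge[OF assms(1,1) _ assms(2)] by (simp add: unit_edge_def)
  thus ?thesis using straighten_unit_path[OF assms(1,1) _ assms(2)] unfolding inv_e_def by simp
qed

lemma inv_map_cong:
  assumes XY: "X \<in> B" "Y \<in> B" "X \<subseteq> Y" and f: "f \<in> Arr (Phi X)"
  shows "(inv_e (X,f), inv_e (Y, PhiM X Y f)) \<in> T.cong"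
proof -
  define a where "a = dom (Phi X) f"
  define b where "b = cod (Phi X) f"
  have ab: "a \<in> Obj (Phi X)" "b \<in> Obj (Phi X)" using dom_cod_Obj[OF XY(1) f] a_def b_def by auto
  have Pf: "PhiM X Y f \<in> Arr (Phi Y)" "dom (Phi Y) (PhiM X Y f) = PhiO X Y a" "cod (Phi Y) (PhiM X Y f) = PhiO X Y b"
    using PhiM_Arr[OF XY f] a_def b_def by auto
  have F1: "(X,a,X,f) \<in> GEdge B" "T.valid (gpath (X,a,X,f))" using arr_GEdge[of X f] XY f a_def by (auto simp: colim_E_iff)
  have F2: "(Y, PhiO X Y a, Y, PhiM X Y f) \<in> GEdge B" "T.valid (gpath (Y, PhiO X Y a, Y, PhiM X Y f))"
    using arr_GEdge[of Y "PhiM X Y f"] XY Pf by (auto simp: colim_E_iff)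
  have E: "(X,a,Y, PhiM X Y f) \<in> GEdge B" using XY ab Pf by (simp add: GEdge_iff)
  have U: "(X, cod (Phi X) f, Y, ide (Phi Y) (PhiO X Y b)) \<in> GEdge B"
    using unit_edge_GEdge[of B X Y b] XY ab b_def by (simp add: unit_edge_def)
  have "(path_cat (gpath (X,a,X,f)) (unit_path X Y b), gpath (X,a,Y, PhiM X Y f)) \<in> T.cong"
    using G_comp_cong[OF subset_refl F1(1) U] cmp_ide_left[OF XY(2) Pf(1)] Pf(3) b_def ide_Arr[OF XY(2)] PhiO_Obj[OF XY ab(2)]
    by (simp add: unit_edge_def unit_path_def)
  also have "(gpath (X,a,Y, PhiM X Y f), path_cat (unit_path X Y a) (gpath (Y, PhiO X Y a, Y, PhiM X Y f))) \<in> T.cong"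
    using T.cong_sym[OF unit_path_edge[of B, OF _ E]] by simp
  finally have "(straighten (path_cat (gpath (X,a,X,f)) (unit_path X Y b)),
                 straighten (path_cat (unit_path X Y a) (gpath (Y, PhiO X Y a, Y, PhiM X Y f)))) \<in> T.cong"
    by (rule straighten_cong)
  moreover have "(straighten (path_cat (gpath (X,a,X,f)) (unit_path X Y b)), straighten (gpath (X,a,X,f))) \<in> T.cong"
    using straighten_unit_right[OF XY ab(2) F1(2)] b_def by simp
  moreover have "(straighten (path_cat (unit_path X Y a) (gpath (Y, PhiO X Y a, Y, PhiM X Y f))),
                  straighten (gpath (Y, PhiO X Y a, Y, PhiM X Y f))) \<in> T.cong"
    using straighten_unit_left[OF XY ab(1) F2(2)] by simp
  ultimately show ?thesis unfolding inv_e_def using a_def Pf(2) by (auto intro: T.cong_trans T.cong_sym)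
qed

lemma presentation_map_inv:
  "presentation_map CV CE cs ct CR (GObj B) (GEdge B) tcolim_s (tcolim_t Phi) (GRel B) inv_v inv_e"
proof unfold_locales
  fix v assume "v \<in> CV"
  then obtain p where "p \<in> GObj B" "v = cl p" unfolding colim_V_def by (rule quotientE)
  thus "inv_v v \<in> GObj B" using inv_v_cl rep_GObj by simp
next
  fix e assume e: "e \<in> CE"
  then obtain Y f where ef: "e = (Y,f)" "Y \<in> B" "f \<in> Arr (Phi Y)" by (cases e) (auto simp: colim_E_iff)
  have "(Y, dom (Phi Y) f) \<in> GObj B" "(Y, cod (Phi Y) f) \<in> GObj B" using dom_cod_Obj ef by (auto simp: tot_obj_iff)
  thus "T.valid (inv_e e) \<and> path_src (inv_e e) = inv_v (cs e) \<and> path_tgt (inv_e e) = inv_v (ct e)"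
    using inv_e_valid e ef inv_v_cl by simp
next
  fix p q assume "(p,q) \<in> CR"
  thus "(path_subst inv_v inv_e p, path_subst inv_v inv_e q) \<in> T.cong"
  proof (cases rule: colim_R_cases)
    case (cmp X f g)
    have e: "(X,f) \<in> CE" "(X,g) \<in> CE" "(X, cmp (Phi X) g f) \<in> CE"
      using cmp cmp_Arr[OF cmp(3-6)] by (auto simp: colim_E_iff)
    show ?thesis unfolding cmp(1,2) path_subst_cat inv_e_edge_path[OF e(1)] inv_e_edge_path[OF e(2)]
      inv_e_edge_path[OF e(3)] by (rule inv_cmp_cong[OF cmp(3-6)])
  next
    case (ide X x)
    have e: "(X, ide (Phi X) x) \<in> CE" and x: "(X,x) \<in> GObj B"
      using ide ide_Arr by (auto simp: colim_E_iff tot_obj_iff)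
    show ?thesis unfolding ide(1,2) inv_e_edge_path[OF e] using inv_ide_cong[OF ide(3,4)] inv_v_cl[OF x] by simp
  next
    case (map X Y f)
    have e: "(X,f) \<in> CE" "(Y, PhiM X Y f) \<in> CE" using map PhiM_Arr[OF map(3-6)] by (auto simp: colim_E_iff)
    show ?thesis unfolding map(1,2) inv_e_edge_path[OF e(1)] inv_e_edge_path[OF e(2)]
      by (rule inv_map_cong[OF map(3-6)])
  qed
qed

sublocale F: presentation_map CV CE cs ct CR "GObj B" "GEdge B" tcolim_s "tcolim_t Phi" "GRel B" inv_v inv_e
  by (rule presentation_map_inv)

lemma inv_delta_cong:
  assumes "T.valid p" shows "(path_subst inv_v inv_e (path_subst delta_v delta_e p), straighten p) \<in> T.cong"
proof -
  have "(path_subst (inv_v \<circ> delta_v) (\<lambda>e. path_subst inv_v inv_e (delta_e e)) p, straighten p) \<in> T.cong"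
    unfolding straighten_def
  proof (rule T.path_subst_conjugate[OF _ _ assms])
    fix v assume "v \<in> GObj B"
    thus "T.valid (\<theta> v) \<and> path_src (\<theta> v) = v \<and> path_tgt (\<theta> v) = (inv_v \<circ> delta_v) v"
      using contr_valid inv_v_cl by (simp add: rep_def)
  next
    fix e assume e: "e \<in> GEdge B"
    then obtain X x Y g where ex: "e = (X,x,Y,g)" by (cases e)
    have h: "X \<in> B" "Y \<in> B" "X \<subseteq> Y" "x \<in> Obj (Phi X)" "dom (Phi Y) g = PhiO X Y x" "(Y,g) \<in> CE"
      using e ex by (auto simp: GEdge_iff colim_E_iff)
    have "path_subst inv_v inv_e (delta_e e) = straighten (gpath (Y, PhiO X Y x, Y, g))"
      using delta_e_eq e ex inv_e_edge_path[OF h(6)] h(5) by (simp add: inv_e_def)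
    also have "(\<dots>, straighten (path_cat (unit_path X Y x) (gpath (Y, PhiO X Y x, Y, g)))) \<in> T.cong"
      using straighten_unit_left[OF h(1-4) arr_GEdge(2)[OF h(6)]] h(5) by (simp add: T.cong_sym)
    also have "(straighten (path_cat (unit_path X Y x) (gpath (Y, PhiO X Y x, Y, g))), straighten (gpath e)) \<in> T.cong"
      using straighten_cong[OF unit_path_edge[of B, OF _ e[unfolded ex]]] ex by simp
    finally show "(path_subst inv_v inv_e (delta_e e),
        path_cat (path_rev (\<theta> (tcolim_s e))) (path_cat (gpath e) (\<theta> (tcolim_t Phi e)))) \<in> T.cong"
      unfolding straighten_def by simp
  qed
  thus ?thesis by (simp add: path_subst_comp)
qed

lemma delta_gpath_id_edge: "path_subst delta_v delta_e (gpath (Y, dom (Phi Y) f, Y, f)) = edge_path cs ct (Y,f)"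
  by (simp add: delta_e_def)

lemma delta_inv_edge_cong:
  assumes e: "(Y,f) \<in> CE"
  shows "(path_subst delta_v delta_e (inv_e (Y,f)),
          path_cat (path_rev (cs (Y,f), [], cs (Y,f))) (path_cat (edge_path cs ct (Y,f)) (ct (Y,f), [], ct (Y,f)))) \<in> C.cong"
proof -
  have "Y \<in> B" "f \<in> Arr (Phi Y)" using e by (simp_all add: colim_E_iff)
  hence d: "(Y, dom (Phi Y) f) \<in> GObj B" "(Y, cod (Phi Y) f) \<in> GObj B"
    using dom_cod_Obj by (simp_all add: tot_obj_iff)
  note d1 = delta_contr[OF d(1)] and d2 = delta_contr[OF d(2)]
  have eq: "path_subst delta_v delta_e (inv_e (Y,f)) = path_cat (path_rev (path_subst delta_v delta_e (\<theta> (Y, dom (Phi Y) f))))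
      (path_cat (edge_path cs ct (Y,f)) (path_subst delta_v delta_e (\<theta> (Y, cod (Phi Y) f))))"
    unfolding inv_e_def straighten_def prod.case path_subst_cat path_subst_rev delta_gpath_id_edge
    unfolding path_simps(6) path_simps(1,2) tcolim_s_simp tcolim_t_simp ..
  have "(path_cat (edge_path cs ct (Y,f)) (path_subst delta_v delta_e (\<theta> (Y, cod (Phi Y) f))),
         path_cat (edge_path cs ct (Y,f)) (cl (Y, cod (Phi Y) f), [], cl (Y, cod (Phi Y) f))) \<in> C.cong"
    using C.cong_valid[OF d2] by (intro C.cong_cat_left[OF d2 C.valid_edge_path[OF e]]) simp
  hence "(path_cat (path_rev (path_subst delta_v delta_e (\<theta> (Y, dom (Phi Y) f))))
           (path_cat (edge_path cs ct (Y,f)) (path_subst delta_v delta_e (\<theta> (Y, cod (Phi Y) f)))),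
         path_cat (path_rev (cl (Y, dom (Phi Y) f), [], cl (Y, dom (Phi Y) f)))
           (path_cat (edge_path cs ct (Y,f)) (cl (Y, cod (Phi Y) f), [], cl (Y, cod (Phi Y) f)))) \<in> C.cong"
    using C.cong_valid[OF d1] by (intro C.cong_cat[OF C.cong_rev[OF d1]]) simp_all
  thus ?thesis unfolding eq by simp
qed

lemma delta_inv_cong:
  assumes "C.valid P" shows "(path_subst delta_v delta_e (path_subst inv_v inv_e P), P) \<in> C.cong"
proof -
  have "(path_subst (delta_v \<circ> inv_v) (\<lambda>e. path_subst delta_v delta_e (inv_e e)) P,
         path_cat (path_rev (path_src P, [], path_src P)) (path_cat P (path_tgt P, [], path_tgt P))) \<in> C.cong"
  proof (rule C.path_subst_conjugate[OF _ _ assms])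
    fix v assume v: "v \<in> CV"
    then obtain q where q: "q \<in> GObj B" "v = cl q" unfolding colim_V_def by (rule quotientE)
    thus "C.valid (v,[],v) \<and> path_src (v,[],v) = v \<and> path_tgt (v,[],v) = (delta_v \<circ> inv_v) v"
      using v inv_v_cl cl_rep by (simp add: C.valid_iff)
  next
    fix e assume "e \<in> CE"
    thus "(path_subst delta_v delta_e (inv_e e),
        path_cat (path_rev (cs e, [], cs e)) (path_cat (edge_path cs ct e) (ct e, [], ct e))) \<in> C.cong"
      using delta_inv_edge_cong by (cases e) simp
  qed
  thus ?thesis unfolding path_subst_comp using assms by (cases P) simp
qed

lemma delta_faithful:
  assumes "T.valid p" "T.valid q" "path_src p = path_src q" "path_tgt p = path_tgt q"
    and "(path_subst delta_v delta_e p, path_subst delta_v delta_e q) \<in> C.cong"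
  shows "(p,q) \<in> T.cong"
proof -
  have "(straighten p, straighten q) \<in> T.cong"
    using F.cong_subst[OF assms(5)] inv_delta_cong[OF assms(1)] inv_delta_cong[OF assms(2)]
    by (meson T.cong_sym T.cong_trans)
  hence "(path_cat (\<theta> (path_src p)) (path_cat (straighten p) (path_rev (\<theta> (path_tgt p)))),
          path_cat (\<theta> (path_src p)) (path_cat (straighten q) (path_rev (\<theta> (path_tgt p))))) \<in> T.cong"
    using contr_valid T.valid_ends[OF assms(1)] straighten_valid[OF assms(1)]
    by (intro T.cong_cat_left T.cong_cat_right T.valid_path_rev) (auto simp: rep_def)
  thus ?thesis using unstraighten[OF assms(1)] unstraighten[OF assms(2)] assms(3,4) by (metis T.cong_sym T.cong_trans)
qed

lemma delta_full:
  assumes a: "a \<in> GObj B" and b: "b \<in> GObj B" and P: "C.valid P" "path_src P = delta_v a" "path_tgt P = delta_v b"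
  shows "\<exists>p. T.valid p \<and> path_src p = a \<and> path_tgt p = b \<and> (path_subst delta_v delta_e p, P) \<in> C.cong"
proof -
  define Q where "Q = path_subst inv_v inv_e P"
  have Q: "T.valid Q" "path_src Q = rep a" "path_tgt Q = rep b"
    using F.valid_path_subst[OF P(1)] P(2,3) inv_v_cl[OF a] inv_v_cl[OF b] Q_def by auto
  define p where "p = path_cat (\<theta> a) (path_cat Q (path_rev (\<theta> b)))"
  have p: "T.valid p" "path_src p = a" "path_tgt p = b"
    unfolding p_def using contr_valid[OF a] contr_valid[OF b] Q
    by (auto intro!: T.valid_path_cat T.valid_path_rev simp: rep_def)
  have "(path_subst delta_v delta_e p, path_cat (cl a, [], cl a) (path_cat P (path_rev (cl b, [], cl b)))) \<in> C.cong"
    unfolding p_def path_subst_cat path_subst_rev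
    using delta_contr[OF a] delta_contr[OF b] delta_inv_cong[OF P(1)] Q_def P(2,3)
      C.cong_valid[OF delta_inv_cong[OF P(1)]] C.cong_valid[OF delta_contr[OF a]] C.cong_valid[OF delta_contr[OF b]]
    by (intro C.cong_cat C.cong_rev) auto
  hence "(path_subst delta_v delta_e p, P) \<in> C.cong" using P(2,3) by simp
  with p show ?thesis by (intro exI[of _ p]) simp
qed

lemma delta_equivalence: "is_equivalence T.pgpd C.pgpd delta_v D.induced_arr"
proof (rule D.is_equivalence_induced[OF delta_faithful delta_full])
  show "delta_v ` GObj B = CV" by (auto simp: colim_V_def quotient_def)
qed

end

theorem theorem2p1:
  fixes n :: nat
    and Phi :: "nat set \<Rightarrow> ('o,'m) gpd"
    and PhiO :: "nat set \<Rightarrow> nat set \<Rightarrow> 'o \<Rightarrow> 'o"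
    and PhiM :: "nat set \<Rightarrow> nat set \<Rightarrow> 'm \<Rightarrow> 'm"
  assumes "n \<ge> 2"
    and "gpd_diagram (Bsets {1..n}) Phi PhiO PhiM"
    and A1: "\<forall>k. 1 \<le> k \<and> k \<le> n - 1 \<longrightarrow> cond_A Phi PhiO PhiM {1..k} {}"
    and A2: "\<forall>k U. 1 \<le> k \<and> k \<le> n - 2 \<and> U \<subseteq> {k+2..n} \<longrightarrow> cond_A Phi PhiO PhiM ({1..k} \<union> U) U"
  shows "is_equivalence (tcolim_gpd (Bsets {1..n}) Phi PhiO PhiM) (colim_gpd (Bsets {1..n}) Phi PhiO PhiM)
           (delta_obj (Bsets {1..n}) Phi PhiO) (delta_arr (Bsets {1..n}) Phi PhiO PhiM)"
proof -
  interpret diagram n Phi PhiO PhiM by unfold_locales (rule assms(2))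
  obtain \<theta> where "contraction (stage n) \<theta>"
    using ex_contraction_stage[OF order_refl obj_inj_stages[OF assms(1) A1 A2]] by blast
  then interpret contracted n Phi PhiO PhiM \<theta>
    by unfold_locales (simp add: stage_def Bsets_rel_def Bsets_def)
  have "delta_arr B Phi PhiO PhiM = D.induced_arr"
    unfolding delta_arr_def pres_fun_arr_def D.induced_arr_def
      path_map_eq_path_subst[where s = tcolim_s and t = "tcolim_t Phi"]
    by (simp add: delta_e_def[abs_def])
  thus ?thesis using delta_equivalence by (simp add: tcolim_gpd_def colim_gpd_def)
qed

end
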